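(* Let $\mathcal{G}=(V,E)$ be a DAG and let $i,j\in V$ be distinct and $K\subseteq V\setminus\{i,j\}$ such that $K$ does not $d$-separate $i$ from $j$. Then $\phi_\mathcal{G}^\ast(\det\Sigma_{\{i\}\cup K,\{j\}\cup K})$ is a monomial if and only if there is a unique trek system from $\{i\}\cup K$ to $\{j\}\cup K$ with no sided intersection.
   Context: For a DAG $\mathcal{G}=(V,E)$ on $V=[n]$, let $\Lambda=(\lambda_{uv})$ with $\lambda_{uv}$ a variable if $u\to v\in E$ and $0$ otherwise, $\Omega=\mathrm{diag}(\omega_1,\dots,\omega_n)$; $\phi_\mathcal{G}^\ast$ is the ring homomorphism from $\mathbb{R}[\sigma_{uv}]$ to $\mathbb{R}[\lambda,\omega]$ sending $\sigma_{uv}$ to the $(u,v)$ entry of $(I-\Lambda)^{-T}\Omega(I-\Lambda)^{-1}$; $\Sigma_{A,B}$ is the submatrix with rows $A$ and columns $B$. A trek from $u$ to $v$ is a pair $(P_L,P_R)$ of directed paths (possibly of length zero) both starting at a common node $s$ (the top), with $P_L$ ending at $u$ (leftmost node) and $P_R$ ending at $v$ (rightmost node). For sets $A,B$ of $k$ nodes, a trek system from $A$ to $B$ is a set of $k$ treks whose leftmost nodes exhaust $A$ and whose rightmost nodes exhaust $B$. It has no sided intersection if the left parts $P_L$ of its treks are pairwise node-disjoint and the right parts $P_R$ are pairwise node-disjoint. $d$-separation is the standard criterion. *)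

theory Defs
  imports "Jordan_Normal_Form.Determinant" "Jordan_Normal_Form.DL_Submatrix"
    "HOL-Library.Poly_Mapping"
begin

text \<open>Graphs: nodes are 0..<n, edges E a set of pairs (u,v) meaning u -> v.\<close>

definition is_dag :: "nat \<Rightarrow> (nat \<times> nat) set \<Rightarrow> bool" where
  "is_dag n E \<longleftrightarrow> E \<subseteq> {..<n} \<times> {..<n} \<and> acyclic E"

text \<open>Polynomial ring R[lambda, omega]: variables and polynomials as
 finitely supported maps from monomials (exponent vectors) to real coefficients.\<close>

datatype var = Lam nat nat | Om nat

type_synonym rpoly = "(var \<Rightarrow>\<^sub>0 nat) \<Rightarrow>\<^sub>0 real"

definition Var :: "var \<Rightarrow> rpoly" where
  "Var x = Poly_Mapping.single (Poly_Mapping.single x 1) 1"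

definition is_monomial :: "rpoly \<Rightarrow> bool" where
  "is_monomial p \<longleftrightarrow> (\<exists>m c. c \<noteq> 0 \<and> p = Poly_Mapping.single m c)"

definition Lambda_mat :: "nat \<Rightarrow> (nat \<times> nat) set \<Rightarrow> rpoly mat" where
  "Lambda_mat n E = mat n n (\<lambda>(u,v). if (u,v) \<in> E then Var (Lam u v) else 0)"

definition Omega_mat :: "nat \<Rightarrow> rpoly mat" where
  "Omega_mat n = mat n n (\<lambda>(u,v). if u = v then Var (Om u) else 0)"

definition mat_inverse :: "nat \<Rightarrow> 'a::comm_ring_1 mat \<Rightarrow> 'a mat" where
  "mat_inverse n M = (THE N. N \<in> carrier_mat n n \<and> N * M = 1\<^sub>m n \<and> M * N = 1\<^sub>m n)"

text \<open>The matrix with (u,v) entry phi*(sigma_uv) = ((I-Lambda)^{-T} Omega (I-Lambda)^{-1})_{uv}.\<close>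
definition phi_Sigma :: "nat \<Rightarrow> (nat \<times> nat) set \<Rightarrow> rpoly mat" where
  "phi_Sigma n E =
     (let L = mat_inverse n (1\<^sub>m n - Lambda_mat n E)
      in transpose_mat L * Omega_mat n * L)"

definition dpath :: "(nat \<times> nat) set \<Rightarrow> nat list \<Rightarrow> bool" where
  "dpath E p \<longleftrightarrow> p \<noteq> [] \<and> (\<forall>k. Suc k < length p \<longrightarrow> (p ! k, p ! Suc k) \<in> E)"

text \<open>A trek (P_L, P_R): both paths start at the common top; P_L ends at the
 leftmost node, P_R at the rightmost node.\<close>
definition is_trek :: "(nat \<times> nat) set \<Rightarrow> nat list \<times> nat list \<Rightarrow> bool" where
  "is_trek E t \<longleftrightarrow> dpath E (fst t) \<and> dpath E (snd t) \<and> hd (fst t) = hd (snd t)"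

definition left_node :: "nat list \<times> nat list \<Rightarrow> nat" where
  "left_node t = last (fst t)"

definition right_node :: "nat list \<times> nat list \<Rightarrow> nat" where
  "right_node t = last (snd t)"

definition trek_system ::
  "(nat \<times> nat) set \<Rightarrow> nat set \<Rightarrow> nat set \<Rightarrow> (nat list \<times> nat list) set \<Rightarrow> bool" where
  "trek_system E A B T \<longleftrightarrow>
     finite T \<and> card T = card A \<and> (\<forall>t\<in>T. is_trek E t) \<and>
     left_node ` T = A \<and> right_node ` T = B"

definition no_sided_intersection :: "(nat list \<times> nat list) set \<Rightarrow> bool" where
  "no_sided_intersection T \<longleftrightarrow>
     (\<forall>t\<in>T. \<forall>t'\<in>T. t \<noteq> t' \<longrightarrow>
        set (fst t) \<inter> set (fst t') = {} \<and> set (snd t) \<inter> set (snd t') = {})"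

definition skel_path :: "(nat \<times> nat) set \<Rightarrow> nat list \<Rightarrow> bool" where
  "skel_path E p \<longleftrightarrow> p \<noteq> [] \<and> distinct p \<and>
     (\<forall>k. Suc k < length p \<longrightarrow> (p ! k, p ! Suc k) \<in> E \<or> (p ! Suc k, p ! k) \<in> E)"

definition collider_at :: "(nat \<times> nat) set \<Rightarrow> nat list \<Rightarrow> nat \<Rightarrow> bool" where
  "collider_at E p k \<longleftrightarrow> (p ! (k - 1), p ! k) \<in> E \<and> (p ! Suc k, p ! k) \<in> E"

definition d_connecting :: "(nat \<times> nat) set \<Rightarrow> nat set \<Rightarrow> nat list \<Rightarrow> bool" where
  "d_connecting E K p \<longleftrightarrow> skel_path E p \<and>
     (\<forall>k. 0 < k \<and> Suc k < length p \<longrightarrow>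
        (if collider_at E p k then (\<exists>d\<in>K. (p ! k, d) \<in> E\<^sup>*) else p ! k \<notin> K))"

definition d_separates :: "(nat \<times> nat) set \<Rightarrow> nat set \<Rightarrow> nat \<Rightarrow> nat \<Rightarrow> bool" where
  "d_separates E K i j \<longleftrightarrow>
     \<not> (\<exists>p. d_connecting E K p \<and> hd p = i \<and> last p = j)"

end

(* By the trek rule, phi*(sigma_uv) = sum_s omega_s L_su L_sv, where L = (I - Lambda)^-1 is the
   path matrix: L_uv is the sum of the path monomials over all directed paths from u to v. The
   Cauchy-Binet formula turns det Sigma_{A,B} into the sum over node sets S of
   omega^S det L_{S,A} det L_{S,B}. The omega-parts keep these summands apart, and a minor
   det L_{S,A} has exactly one monomial for every system of vertex-disjoint paths from S to A.
   Hence the determinant is a monomial iff there is exactly one pair of vertex-disjoint path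
   systems from a common source set S to A and to B; gluing the two paths that start at the
   same source turns such pairs into exactly the trek systems from A to B without sided
   intersection. *)

theory Submission
  imports Defs "HOL-Library.Nat_Bijection"
begin

abbreviation pkeys :: "('a \<Rightarrow>\<^sub>0 'b::zero) \<Rightarrow> 'a set" where
  "pkeys \<equiv> Poly_Mapping.keys"

abbreviation plookup :: "('a \<Rightarrow>\<^sub>0 'b::zero) \<Rightarrow> 'a \<Rightarrow> 'b" where
  "plookup \<equiv> Poly_Mapping.lookup"

section \<open>Polynomials\<close>

fun var_code :: "var \<Rightarrow> nat" where
  "var_code (Lam a b) = prod_encode (0, prod_encode (a, b))"
| "var_code (Om a) = prod_encode (1, a)"

lemma inj_var_code: "inj var_code"
proof (rule injI)
  fix x y assume "var_code x = var_code y"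
  then show "x = y"
    by (cases x; cases y) (auto simp: prod_encode_eq)
qed

text \<open>Any linear order on the variables will do: it only serves to order the monomials,
  so that the leading and the trailing monomial of a product can be read off.\<close>

instantiation var :: linorder
begin

definition less_eq_var :: "var \<Rightarrow> var \<Rightarrow> bool" where
  "less_eq_var x y \<longleftrightarrow> var_code x \<le> var_code y"

definition less_var :: "var \<Rightarrow> var \<Rightarrow> bool" where
  "less_var x y \<longleftrightarrow> var_code x < var_code y"

instance
  by standard (auto simp: less_eq_var_def less_var_def inj_eq[OF inj_var_code])

end

lemma lookup_mult_unique_decomposition:
  fixes f g :: "'a::monoid_add \<Rightarrow>\<^sub>0 'b::semiring_0"
  assumes "\<And>l q. l \<in> pkeys f \<Longrightarrow> q \<in> pkeys g \<Longrightarrow> l + q = a + b \<Longrightarrow> l = a \<and> q = b"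
  shows "plookup (f * g) (a + b) = plookup f a * plookup g b"
proof -
  have "plookup f l * Sum_any (\<lambda>q. plookup g q when a + b = l + q) =
      (if l = a then plookup f a * plookup g b else 0)" for l
  proof (cases "plookup f l = 0")
    case False
    have "(plookup g q when a + b = l + q) = (if l = a then (plookup g q when q = b) else 0)" for q
      using assms[of l q] False by (cases "plookup g q = 0") (auto simp: when_def in_keys_iff)
    then show ?thesis by (cases "l = a") simp_all
  qed auto
  then show ?thesis
    by (simp add: lookup_mult Sum_any.delta)
qed

lemma card_keys_mult_ge_2:
  fixes f g :: "'a::{ordered_cancel_comm_monoid_add, linorder} \<Rightarrow>\<^sub>0 'b::semiring_no_zero_divisors"
  assumes "g \<noteq> 0" and "2 \<le> card (pkeys f)"
  shows "2 \<le> card (pkeys (f * g))"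
proof -
  let ?F = "pkeys f" and ?G = "pkeys g"
  have fin: "finite ?F" "finite ?G" by auto
  have neF: "?F \<noteq> {}" and neG: "?G \<noteq> {}" using assms by auto
  have "Min ?F \<noteq> Max ?F"
  proof
    assume "Min ?F = Max ?F"
    then have "x = Min ?F" if "x \<in> ?F" for x
      using Min_le[OF fin(1) that] Max_ge[OF fin(1) that] by simp
    then have "?F \<subseteq> {Min ?F}" by blast
    then show False using assms(2) card_mono[of "{Min ?F}" ?F] by simp
  qed
  moreover have "Min ?F \<le> Max ?F" using Max_ge[OF fin(1) Min_in[OF fin(1) neF]] .
  ultimately have MinMax: "Min ?F < Max ?F" by simp
  have top: "plookup (f * g) (Max ?F + Max ?G) = plookup f (Max ?F) * plookup g (Max ?G)"
  proof (rule lookup_mult_unique_decomposition)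
    fix l q assume "l \<in> ?F" "q \<in> ?G" "l + q = Max ?F + Max ?G"
    moreover have "l \<le> Max ?F" "q \<le> Max ?G" using calculation fin by auto
    ultimately show "l = Max ?F \<and> q = Max ?G"
      by (metis add_le_less_mono add_less_le_mono order.not_eq_order_implies_strict order_less_irrefl)
  qed
  have bot: "plookup (f * g) (Min ?F + Min ?G) = plookup f (Min ?F) * plookup g (Min ?G)"
  proof (rule lookup_mult_unique_decomposition)
    fix l q assume "l \<in> ?F" "q \<in> ?G" "l + q = Min ?F + Min ?G"
    moreover have "Min ?F \<le> l" "Min ?G \<le> q" using calculation fin by auto
    ultimately show "l = Min ?F \<and> q = Min ?G"
      by (metis add_le_less_mono add_less_le_mono order.not_eq_order_implies_strict order_less_irrefl)
  qed
  have "Max ?F \<in> ?F" "Max ?G \<in> ?G" "Min ?F \<in> ?F" "Min ?G \<in> ?G"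
    using fin neF neG by auto
  then have sub: "{Min ?F + Min ?G, Max ?F + Max ?G} \<subseteq> pkeys (f * g)"
    using top bot by (simp add: in_keys_iff)
  have "Min ?F + Min ?G < Max ?F + Max ?G"
    using MinMax fin neG by (intro add_less_le_mono) auto
  then show ?thesis using card_mono[OF _ sub] by simp
qed

lemma keys_eq_singleton_imp_single:
  "pkeys p = {m} \<Longrightarrow> p = Poly_Mapping.single m (plookup p m)"
  by (rule poly_mapping_eqI) (metis in_keys_iff lookup_single_eq lookup_single_not_eq singletonD singletonI)

lemma card_keys_mult_eq_1_iff:
  fixes f g :: "'a::{ordered_cancel_comm_monoid_add, linorder} \<Rightarrow>\<^sub>0 'b::{comm_semiring_0, semiring_no_zero_divisors}"
  shows "card (pkeys (f * g)) = 1 \<longleftrightarrow> card (pkeys f) = 1 \<and> card (pkeys g) = 1"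
proof
  assume fg: "card (pkeys (f * g)) = 1"
  then have nz: "f \<noteq> 0" "g \<noteq> 0" by auto
  then have "card (pkeys f) \<noteq> 0" "card (pkeys g) \<noteq> 0" by (simp_all add: card_0_eq)
  moreover have "\<not> 2 \<le> card (pkeys f)" "\<not> 2 \<le> card (pkeys g)"
    using card_keys_mult_ge_2[of g f] card_keys_mult_ge_2[of f g] nz fg by (auto simp: mult.commute)
  ultimately show "card (pkeys f) = 1 \<and> card (pkeys g) = 1" by linarith
next
  assume "card (pkeys f) = 1 \<and> card (pkeys g) = 1"
  then obtain a b where ab: "pkeys f = {a}" "pkeys g = {b}" by (auto simp: card_1_singleton_iff)
  have "f * g = Poly_Mapping.single a (plookup f a) * Poly_Mapping.single b (plookup g b)"
    by (rule arg_cong2[where f = "(*)", OF keys_eq_singleton_imp_single[OF ab(1)]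
          keys_eq_singleton_imp_single[OF ab(2)]])
  moreover have "plookup f a \<noteq> 0" "plookup g b \<noteq> 0" using ab in_keys_iff[of a f] in_keys_iff[of b g] by auto
  ultimately show "card (pkeys (f * g)) = 1" by (simp add: mult_single)
qed

lemma is_monomial_iff_card_keys: "is_monomial p \<longleftrightarrow> card (pkeys p) = 1"
proof
  assume "card (pkeys p) = 1"
  then obtain m where m: "pkeys p = {m}" by (auto simp: card_1_singleton_iff)
  then have "plookup p m \<noteq> 0" using in_keys_iff[of m p] by auto
  then show "is_monomial p" unfolding is_monomial_def using keys_eq_singleton_imp_single[OF m] by blast
qed (auto simp: is_monomial_def)

lemma keys_single_one_mult:
  fixes p :: "'a::cancel_comm_monoid_add \<Rightarrow>\<^sub>0 'b::semiring_1"
  shows "pkeys (Poly_Mapping.single m 1 * p) = (+) m ` pkeys p"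
proof
  show "pkeys (Poly_Mapping.single m 1 * p) \<subseteq> (+) m ` pkeys p"
    using keys_mult[of "Poly_Mapping.single m 1" p] by auto
  have "plookup (Poly_Mapping.single m 1 * p) (m + x) = plookup p x" for x
    using lookup_mult_unique_decomposition[of "Poly_Mapping.single m 1" p m x] by simp
  then show "(+) m ` pkeys p \<subseteq> pkeys (Poly_Mapping.single m 1 * p)"
    by (auto simp: in_keys_iff)
qed

lemma card_keys_single_one_mult:
  fixes p :: "'a::cancel_comm_monoid_add \<Rightarrow>\<^sub>0 'b::semiring_1"
  shows "card (pkeys (Poly_Mapping.single m 1 * p)) = card (pkeys p)"
  unfolding keys_single_one_mult by (rule card_image) (simp add: inj_on_def)

lemma keys_add_disjoint:
  fixes p q :: "'a \<Rightarrow>\<^sub>0 'b::monoid_add"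
  assumes "pkeys p \<inter> pkeys q = {}"
  shows "pkeys (p + q) = pkeys p \<union> pkeys q"
proof
  show "pkeys (p + q) \<subseteq> pkeys p \<union> pkeys q" by (rule keys_add)
  show "pkeys p \<union> pkeys q \<subseteq> pkeys (p + q)"
  proof
    fix m assume "m \<in> pkeys p \<union> pkeys q"
    moreover have "m \<notin> pkeys p \<or> m \<notin> pkeys q" using assms by blast
    ultimately show "m \<in> pkeys (p + q)" by (auto simp: in_keys_iff lookup_add)
  qed
qed

lemma card_keys_sum_disjoint:
  fixes f :: "'i \<Rightarrow> 'a \<Rightarrow>\<^sub>0 'b::comm_monoid_add"
  assumes "finite I" and "\<And>i j. i \<in> I \<Longrightarrow> j \<in> I \<Longrightarrow> i \<noteq> j \<Longrightarrow> pkeys (f i) \<inter> pkeys (f j) = {}"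
  shows "card (pkeys (sum f I)) = (\<Sum>i\<in>I. card (pkeys (f i)))"
proof -
  have "pkeys (sum f I) = (\<Union>i\<in>I. pkeys (f i))"
    using assms
  proof (induction I rule: finite_induct)
    case (insert x F)
    then have "pkeys (f x) \<inter> pkeys (sum f F) = {}" by auto
    then show ?case using insert by (simp add: keys_add_disjoint)
  qed simp
  then show ?thesis using assms by (simp add: card_UN_disjoint)
qed

lemma keys_neg_one_power_mult:
  fixes p :: "'a::comm_monoid_add \<Rightarrow>\<^sub>0 'b::comm_ring_1"
  shows "pkeys ((-1) ^ j * p) = pkeys p"
  by (cases "even j") simp_all

section \<open>Directed paths and the path matrix\<close>

definition paths :: "(nat \<times> nat) set \<Rightarrow> nat \<Rightarrow> nat \<Rightarrow> nat list set" where
  "paths E u v = {p. dpath E p \<and> hd p = u \<and> last p = v}"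

fun path_monomial :: "nat list \<Rightarrow> rpoly" where
  "path_monomial (x # y # r) = Var (Lam x y) * path_monomial (y # r)"
| "path_monomial _ = 1"

definition path_sum :: "(nat \<times> nat) set \<Rightarrow> nat \<Rightarrow> nat \<Rightarrow> rpoly" where
  "path_sum E u v = (\<Sum>p\<in>paths E u v. path_monomial p)"

definition path_matrix :: "nat \<Rightarrow> (nat \<times> nat) set \<Rightarrow> rpoly mat" where
  "path_matrix n E = mat n n (\<lambda>(u, v). path_sum E u v)"

lemma dpath_singleton [simp]: "dpath E [x]"
  by (simp add: dpath_def)

lemma dpath_Cons_Cons [simp]: "dpath E (x # y # r) \<longleftrightarrow> (x, y) \<in> E \<and> dpath E (y # r)"
proof
  assume p: "dpath E (x # y # r)"
  have "((y # r) ! k, (y # r) ! Suc k) \<in> E" if "Suc k < length (y # r)" for k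
    using p that unfolding dpath_def by (metis Suc_less_eq length_Cons nth_Cons_Suc)
  then show "(x, y) \<in> E \<and> dpath E (y # r)" using p unfolding dpath_def by force
next
  assume xy: "(x, y) \<in> E \<and> dpath E (y # r)"
  show "dpath E (x # y # r)" unfolding dpath_def
  proof (intro conjI allI impI)
    fix k assume "Suc k < length (x # y # r)"
    then show "((x # y # r) ! k, (x # y # r) ! Suc k) \<in> E"
      using xy unfolding dpath_def by (cases k) auto
  qed simp
qed

lemma dpath_not_Nil: "dpath E p \<Longrightarrow> p \<noteq> []"
  by (simp add: dpath_def)

lemma dpath_snoc: "dpath E (q @ [v]) \<longleftrightarrow> q = [] \<or> (dpath E q \<and> (last q, v) \<in> E)"
proof (induction q)
  case (Cons a q)
  then show ?case by (cases q) auto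
qed simp

lemma dpath_nth_trancl:
  assumes "dpath E p" "i < j" "j < length p"
  shows "(p ! i, p ! j) \<in> E\<^sup>+"
  using assms(2,3)
proof (induction j)
  case (Suc j)
  have "(p ! j, p ! Suc j) \<in> E" using assms(1) Suc.prems unfolding dpath_def by auto
  then show ?case using Suc by (cases "i = j") auto
qed simp

lemma dpath_mem_rtrancl_last:
  assumes "dpath E p" "x \<in> set p" shows "(x, last p) \<in> E\<^sup>*"
proof -
  obtain i where i: "i < length p" "p ! i = x" using assms(2) by (metis in_set_conv_nth)
  have ne: "p \<noteq> []" using assms(1) by (rule dpath_not_Nil)
  show ?thesis
  proof (cases "i < length p - 1")
    case True
    then show ?thesis using i ne dpath_nth_trancl[OF assms(1), of i "length p - 1"] by (simp add: last_conv_nth)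
  next
    case False
    then have "i = length p - 1" using i by simp
    then show ?thesis using i ne by (simp add: last_conv_nth)
  qed
qed

lemma dpath_hd_rtrancl_last: "dpath E p \<Longrightarrow> (hd p, last p) \<in> E\<^sup>*"
  using dpath_mem_rtrancl_last dpath_not_Nil hd_in_set by blast

lemma dpath_distinct:
  assumes "acyclic E" "dpath E p" shows "distinct p"
proof (rule ccontr)
  assume "\<not> distinct p"
  then obtain i j where ij: "i < j" "j < length p" "p ! i = p ! j"
    by (metis distinct_conv_nth linorder_neqE_nat)
  then have "(p ! i, p ! i) \<in> E\<^sup>+" using dpath_nth_trancl[OF assms(2) ij(1,2)] by simp
  then show False using assms(1) by (simp add: acyclic_def)
qed

lemma dpath_hd_eq_last:
  assumes "acyclic E" "dpath E p" "hd p = last p" shows "p = [hd p]"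
  using dpath_distinct[OF assms(1,2)] dpath_not_Nil[OF assms(2)] assms(3)
  by (metis distinct.simps(2) hd_Cons_tl last.simps last_in_set)

lemma dpath_set_subset:
  assumes "E \<subseteq> {..<n} \<times> {..<n}" "dpath E p" shows "set p \<subseteq> insert (hd p) {..<n}"
proof
  fix x assume "x \<in> set p"
  then obtain k where k: "k < length p" "p ! k = x" by (metis in_set_conv_nth)
  show "x \<in> insert (hd p) {..<n}"
  proof (cases k)
    case 0 then show ?thesis using k by (simp add: hd_conv_nth)
  next
    case (Suc k')
    then have "(p ! k', p ! k) \<in> E" using assms(2) k unfolding dpath_def by auto
    then show ?thesis using assms(1) k by auto
  qed
qed

lemma finite_paths:
  assumes "is_dag n E" shows "finite (paths E u v)"
proof -
  have "paths E u v \<subseteq> {xs. set xs \<subseteq> insert u {..<n} \<and> distinct xs}"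
    using assms dpath_set_subset[of E n] dpath_distinct[of E]
    unfolding is_dag_def paths_def by auto
  then show ?thesis by (rule finite_subset) (simp add: finite_subset_distinct)
qed

lemma paths_self: "acyclic E \<Longrightarrow> paths E u u = {[u]}"
  unfolding paths_def using dpath_hd_eq_last by fastforce

lemma paths_last_edge:
  assumes "u \<noteq> v"
  shows "paths E u v = (\<Union>w\<in>{w. (w, v) \<in> E}. (\<lambda>q. q @ [v]) ` paths E u w)"
proof
  show "paths E u v \<subseteq> (\<Union>w\<in>{w. (w, v) \<in> E}. (\<lambda>q. q @ [v]) ` paths E u w)"
  proof
    fix p assume "p \<in> paths E u v"
    then have d: "dpath E p" "hd p = u" "last p = v" by (auto simp: paths_def)
    then have pe: "p = butlast p @ [v]" by (metis append_butlast_last_id dpath_not_Nil)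
    then have "butlast p \<noteq> []" using d assms by (metis append_Nil list.sel(1))
    then have "dpath E (butlast p)" "(last (butlast p), v) \<in> E" "hd (butlast p) = u"
      using d pe dpath_snoc[of E "butlast p" v] by (auto, metis hd_append2)
    then show "p \<in> (\<Union>w\<in>{w. (w, v) \<in> E}. (\<lambda>q. q @ [v]) ` paths E u w)"
      using pe by (auto simp: paths_def)
  qed
  show "(\<Union>w\<in>{w. (w, v) \<in> E}. (\<lambda>q. q @ [v]) ` paths E u w) \<subseteq> paths E u v"
    by (auto simp: paths_def dpath_snoc dpath_not_Nil)
qed

lemma paths_first_edge:
  assumes "u \<noteq> v"
  shows "paths E u v = (\<Union>w\<in>{w. (u, w) \<in> E}. (\<lambda>q. u # q) ` paths E w v)"
proof
  show "paths E u v \<subseteq> (\<Union>w\<in>{w. (u, w) \<in> E}. (\<lambda>q. u # q) ` paths E w v)"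
  proof
    fix p assume "p \<in> paths E u v"
    then have d: "dpath E p" "hd p = u" "last p = v" by (auto simp: paths_def)
    then obtain w r where "p = u # w # r" using assms
      by (metis dpath_not_Nil last_ConsL list.exhaust_sel)
    then show "p \<in> (\<Union>w\<in>{w. (u, w) \<in> E}. (\<lambda>q. u # q) ` paths E w v)"
      using d by (auto simp: paths_def)
  qed
  show "(\<Union>w\<in>{w. (u, w) \<in> E}. (\<lambda>q. u # q) ` paths E w v) \<subseteq> paths E u v"
    by (auto simp: paths_def dpath_not_Nil) (metis dpath_Cons_Cons dpath_not_Nil list.collapse)
qed

lemma path_monomial_snoc:
  "q \<noteq> [] \<Longrightarrow> path_monomial (q @ [v]) = path_monomial q * Var (Lam (last q) v)"
  by (induction q rule: path_monomial.induct) (simp_all add: mult.assoc)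

lemma path_monomial_Cons:
  "q \<noteq> [] \<Longrightarrow> path_monomial (u # q) = Var (Lam u (hd q)) * path_monomial q"
  by (cases q) auto

lemma path_sum_eq_0:
  assumes "(u, v) \<notin> E\<^sup>*" shows "path_sum E u v = 0"
proof -
  have "paths E u v = {}" using assms dpath_hd_rtrancl_last unfolding paths_def by blast
  then show ?thesis by (simp add: path_sum_def)
qed

lemma path_sum_self: "acyclic E \<Longrightarrow> path_sum E u u = 1"
  by (simp add: path_sum_def paths_self)

lemma finite_parents: "is_dag n E \<Longrightarrow> finite {w. (w, v) \<in> E}"
  unfolding is_dag_def by (rule finite_subset[of _ "{..<n}"]) auto

lemma finite_children: "is_dag n E \<Longrightarrow> finite {w. (u, w) \<in> E}"
  unfolding is_dag_def by (rule finite_subset[of _ "{..<n}"]) auto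

text \<open>The entrywise form of \<open>L = I + L \<Lambda>\<close> and \<open>L = I + \<Lambda> L\<close> for the path matrix \<open>L\<close>.\<close>

lemma path_sum_last_edge:
  assumes dag: "is_dag n E"
  shows "path_sum E u v = of_bool (u = v) + (\<Sum>w\<in>{w. (w, v) \<in> E}. path_sum E u w * Var (Lam w v))"
proof (cases "u = v")
  case True
  have "path_sum E v w = 0" if "(w, v) \<in> E" for w
    using dag that rtrancl_into_trancl1[of v w E v] by (intro path_sum_eq_0) (auto simp: is_dag_def acyclic_def)
  then show ?thesis using True dag by (simp add: path_sum_self is_dag_def)
next
  case False
  have "path_sum E u v = (\<Sum>w\<in>{w. (w, v) \<in> E}. \<Sum>p\<in>(\<lambda>q. q @ [v]) ` paths E u w. path_monomial p)"
    unfolding path_sum_def paths_last_edge[OF False]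
    by (rule sum.UNION_disjoint) (auto simp: finite_parents[OF dag] finite_paths[OF dag], auto simp: paths_def)
  also have "\<dots> = (\<Sum>w\<in>{w. (w, v) \<in> E}. path_sum E u w * Var (Lam w v))"
  proof (rule sum.cong[OF refl])
    fix w
    have "(\<Sum>p\<in>(\<lambda>q. q @ [v]) ` paths E u w. path_monomial p) =
        (\<Sum>q\<in>paths E u w. path_monomial (q @ [v]))"
      using sum.reindex[of "\<lambda>q. q @ [v]" "paths E u w" path_monomial] by (simp add: inj_on_def o_def)
    also have "\<dots> = (\<Sum>q\<in>paths E u w. path_monomial q * Var (Lam w v))"
      by (rule sum.cong) (auto simp: paths_def dpath_not_Nil path_monomial_snoc)
    finally show "(\<Sum>p\<in>(\<lambda>q. q @ [v]) ` paths E u w. path_monomial p) = path_sum E u w * Var (Lam w v)"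
      by (simp add: path_sum_def sum_distrib_right)
  qed
  finally show ?thesis using False by simp
qed

lemma path_sum_first_edge:
  assumes dag: "is_dag n E"
  shows "path_sum E u v = of_bool (u = v) + (\<Sum>w\<in>{w. (u, w) \<in> E}. Var (Lam u w) * path_sum E w v)"
proof (cases "u = v")
  case True
  have "path_sum E w u = 0" if "(u, w) \<in> E" for w
    using dag that rtrancl_into_trancl2[of u w E u] by (intro path_sum_eq_0) (auto simp: is_dag_def acyclic_def)
  then show ?thesis using True dag by (simp add: path_sum_self is_dag_def)
next
  case False
  have "path_sum E u v = (\<Sum>w\<in>{w. (u, w) \<in> E}. \<Sum>p\<in>(\<lambda>q. u # q) ` paths E w v. path_monomial p)"
    unfolding path_sum_def paths_first_edge[OF False]
    by (rule sum.UNION_disjoint) (auto simp: finite_children[OF dag] finite_paths[OF dag], auto simp: paths_def)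
  also have "\<dots> = (\<Sum>w\<in>{w. (u, w) \<in> E}. Var (Lam u w) * path_sum E w v)"
  proof (rule sum.cong[OF refl])
    fix w
    have "(\<Sum>p\<in>(\<lambda>q. u # q) ` paths E w v. path_monomial p) = (\<Sum>q\<in>paths E w v. path_monomial (u # q))"
      using sum.reindex[of "\<lambda>q. u # q" "paths E w v" path_monomial] by (simp add: inj_on_def o_def)
    also have "\<dots> = (\<Sum>q\<in>paths E w v. Var (Lam u w) * path_monomial q)"
      by (rule sum.cong) (auto simp: paths_def dpath_not_Nil path_monomial_Cons)
    finally show "(\<Sum>p\<in>(\<lambda>q. u # q) ` paths E w v. path_monomial p) = Var (Lam u w) * path_sum E w v"
      by (simp add: path_sum_def sum_distrib_left)
  qed
  finally show ?thesis using False by simp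
qed

lemma path_matrix_mult_I_minus_Lambda:
  assumes dag: "is_dag n E"
  shows "path_matrix n E * (1\<^sub>m n - Lambda_mat n E) = 1\<^sub>m n"
proof (rule eq_matI)
  fix u v assume "u < dim_row (1\<^sub>m n :: rpoly mat)" "v < dim_col (1\<^sub>m n :: rpoly mat)"
  then have u: "u < n" and v: "v < n" by auto
  have "(\<Sum>w<n. path_sum E u w * (if (w, v) \<in> E then Var (Lam w v) else 0)) =
      (\<Sum>w\<in>{w. (w, v) \<in> E}. path_sum E u w * Var (Lam w v))"
    using dag by (intro sum.mono_neutral_cong_right) (auto simp: is_dag_def)
  then have "(path_matrix n E * (1\<^sub>m n - Lambda_mat n E)) $$ (u, v) =
      path_sum E u v - (\<Sum>w\<in>{w. (w, v) \<in> E}. path_sum E u w * Var (Lam w v))"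
    using u v by (simp add: path_matrix_def Lambda_mat_def scalar_prod_def lessThan_atLeast0
        right_diff_distrib sum_subtractf if_distrib[of "(*) _"] sum.delta' cong: if_cong)
  then show "(path_matrix n E * (1\<^sub>m n - Lambda_mat n E)) $$ (u, v) = 1\<^sub>m n $$ (u, v)"
    using u v path_sum_last_edge[OF dag, of u v] by simp
qed (auto simp: path_matrix_def Lambda_mat_def)

lemma I_minus_Lambda_mult_path_matrix:
  assumes dag: "is_dag n E"
  shows "(1\<^sub>m n - Lambda_mat n E) * path_matrix n E = 1\<^sub>m n"
proof (rule eq_matI)
  fix u v assume "u < dim_row (1\<^sub>m n :: rpoly mat)" "v < dim_col (1\<^sub>m n :: rpoly mat)"
  then have u: "u < n" and v: "v < n" by auto
  have "(\<Sum>w<n. (if (u, w) \<in> E then Var (Lam u w) else 0) * path_sum E w v) =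
      (\<Sum>w\<in>{w. (u, w) \<in> E}. Var (Lam u w) * path_sum E w v)"
    using dag by (intro sum.mono_neutral_cong_right) (auto simp: is_dag_def)
  then have "((1\<^sub>m n - Lambda_mat n E) * path_matrix n E) $$ (u, v) =
      path_sum E u v - (\<Sum>w\<in>{w. (u, w) \<in> E}. Var (Lam u w) * path_sum E w v)"
    using u v by (simp add: path_matrix_def Lambda_mat_def scalar_prod_def lessThan_atLeast0
        left_diff_distrib sum_subtractf if_distrib[of "\<lambda>x. x * _"] sum.delta cong: if_cong)
  then show "((1\<^sub>m n - Lambda_mat n E) * path_matrix n E) $$ (u, v) = 1\<^sub>m n $$ (u, v)"
    using u v path_sum_first_edge[OF dag, of u v] by simp
qed (auto simp: path_matrix_def Lambda_mat_def)

lemma mat_inverse_I_minus_Lambda: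
  assumes dag: "is_dag n E"
  shows "mat_inverse n (1\<^sub>m n - Lambda_mat n E) = path_matrix n E"
  unfolding mat_inverse_def
proof (rule the_equality)
  let ?M = "1\<^sub>m n - Lambda_mat n E" and ?L = "path_matrix n E"
  have M: "?M \<in> carrier_mat n n" unfolding carrier_mat_def Lambda_mat_def by simp
  have L: "?L \<in> carrier_mat n n" by (simp add: path_matrix_def)
  note inv = path_matrix_mult_I_minus_Lambda[OF dag] I_minus_Lambda_mult_path_matrix[OF dag]
  show "?L \<in> carrier_mat n n \<and> ?L * ?M = 1\<^sub>m n \<and> ?M * ?L = 1\<^sub>m n"
    by (simp only: L inv simp_thms)
  fix N assume N: "N \<in> carrier_mat n n \<and> N * ?M = 1\<^sub>m n \<and> ?M * N = 1\<^sub>m n"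
  then have Nc: "N \<in> carrier_mat n n" and NM: "N * ?M = 1\<^sub>m n" by (simp_all only: simp_thms)
  have "N = N * (?M * ?L)" using inv(2) right_mult_one_mat[OF Nc] by simp
  also have "\<dots> = (N * ?M) * ?L" using assoc_mult_mat[OF Nc M L] by simp
  also have "\<dots> = ?L" using NM left_mult_one_mat[OF L] by simp
  finally show "N = ?L" .
qed

lemma phi_Sigma_trek_rule:
  assumes dag: "is_dag n E" and u: "u < n" and v: "v < n"
  shows "phi_Sigma n E $$ (u, v) = (\<Sum>s<n. Var (Om s) * path_sum E s u * path_sum E s v)"
proof -
  let ?L = "path_matrix n E"
  have LO: "(transpose_mat ?L * Omega_mat n) $$ (u, w) = Var (Om w) * path_sum E w u" if "w < n" for w
    using u that by (simp add: path_matrix_def Omega_mat_def scalar_prod_def lessThan_atLeast0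
        if_distrib[of "(*) _"] sum.delta cong: if_cong)
  have "phi_Sigma n E $$ (u, v) = (\<Sum>w<n. (transpose_mat ?L * Omega_mat n) $$ (u, w) * path_sum E w v)"
    using u v by (simp add: phi_Sigma_def mat_inverse_I_minus_Lambda[OF dag] Let_def
        path_matrix_def Omega_mat_def scalar_prod_def lessThan_atLeast0)
  also have "\<dots> = (\<Sum>w<n. Var (Om w) * path_sum E w u * path_sum E w v)"
    by (rule sum.cong) (simp_all add: LO)
  finally show ?thesis .
qed

lemma dim_phi_Sigma:
  assumes "is_dag n E" shows "dim_row (phi_Sigma n E) = n" "dim_col (phi_Sigma n E) = n"
  using assms by (simp_all add: phi_Sigma_def Let_def mat_inverse_I_minus_Lambda path_matrix_def Omega_mat_def)

section \<open>Minors with indexed rows and columns\<close>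

text \<open>The rows and columns are selected by arbitrary index maps, so that rows may be permuted,
  repeated or replaced one at a time.\<close>

definition minor :: "(nat \<Rightarrow> nat \<Rightarrow> 'a::comm_ring_1) \<Rightarrow> (nat \<Rightarrow> nat) \<Rightarrow> (nat \<Rightarrow> nat) \<Rightarrow> nat \<Rightarrow> 'a" where
  "minor M \<alpha> \<beta> k = det (mat k k (\<lambda>(x, y). M (\<alpha> x) (\<beta> y)))"

lemma minor_leibniz:
  "minor M \<alpha> \<beta> k = (\<Sum>p | p permutes {..<k}. signof p * (\<Prod>i<k. M (\<alpha> i) (\<beta> (p i))))"
  unfolding minor_def det_def'[OF mat_carrier]
  by (rule sum.cong) (auto simp: lessThan_atLeast0 intro!: prod.cong)

lemma minor_leibniz_columns:
  "minor M \<gamma> \<alpha> k = (\<Sum>p | p permutes {..<k}. signof p * (\<Prod>i<k. M (\<gamma> (p i)) (\<alpha> i)))"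
proof -
  let ?N = "mat k k (\<lambda>(i, j). M (\<gamma> j) (\<alpha> i))"
  have "det ?N = (\<Sum>p | p permutes {..<k}. signof p * (\<Prod>i<k. M (\<gamma> (p i)) (\<alpha> i)))"
    unfolding det_def'[OF mat_carrier]
    by (rule sum.cong) (auto simp: lessThan_atLeast0 permutes_in_image intro!: prod.cong)
  moreover have "transpose_mat ?N = mat k k (\<lambda>(x, y). M (\<gamma> x) (\<alpha> y))"
    by (rule eq_matI) auto
  ultimately show ?thesis
    unfolding minor_def by (metis det_transpose mat_carrier)
qed

lemma minor_scale_rows:
  "minor (\<lambda>u v. c u * M u v) \<alpha> \<beta> k = (\<Prod>i<k. c (\<alpha> i)) * minor M \<alpha> \<beta> k"
  unfolding minor_leibniz by (simp add: prod.distrib sum_distrib_left ac_simps)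

lemma minor_not_inj_rows:
  assumes "\<not> inj_on \<alpha> {..<k}"
  shows "minor M \<alpha> \<beta> k = 0"
proof -
  obtain i j where ij: "i < k" "j < k" "i \<noteq> j" "\<alpha> i = \<alpha> j"
    using assms unfolding inj_on_def by auto
  show ?thesis unfolding minor_def
    by (rule det_identical_rows[OF _ ij(3) ij(1) ij(2)]) (auto simp: ij intro!: eq_vecI)
qed

lemma minor_identical_columns:
  assumes "y0 < k" "y1 < k" "y0 \<noteq> y1" "\<beta> y0 = \<beta> y1"
  shows "minor M \<alpha> \<beta> k = 0"
  unfolding minor_def
  by (rule det_identical_columns[OF mat_carrier assms(3,1,2)]) (auto simp: assms intro!: eq_vecI)

lemma minor_permute_rows:
  assumes "\<pi> permutes {..<k}"
  shows "minor M (\<lambda>i. \<gamma> (\<pi> i)) \<beta> k = signof \<pi> * minor M \<gamma> \<beta> k"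
proof -
  let ?A = "mat k k (\<lambda>(x, y). M (\<gamma> x) (\<beta> y))"
  have "mat k k (\<lambda>(x, y). M (\<gamma> (\<pi> x)) (\<beta> y)) = mat k k (\<lambda>(i, j). ?A $$ (\<pi> i, j))"
    using permutes_in_image[OF assms] by (intro eq_matI) auto
  then show ?thesis
    unfolding minor_def using det_permute_rows[of ?A k \<pi>] assms by (simp add: lessThan_atLeast0)
qed

lemma minor_unit_row:
  assumes x0: "x0 < k" and y0: "y0 < k"
    and row: "\<And>j. j < k \<Longrightarrow> M (\<alpha> x0) (\<beta> j) = of_bool (j = y0)"
  shows "minor M \<alpha> \<beta> k =
    (-1) ^ (x0 + y0) * minor M (\<alpha> \<circ> insert_index x0) (\<beta> \<circ> insert_index y0) (k - 1)"
proof -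
  let ?A = "mat k k (\<lambda>(x, y). M (\<alpha> x) (\<beta> y))"
  have del: "mat_delete ?A x0 y0 =
      mat (k - 1) (k - 1) (\<lambda>(x, y). M (\<alpha> (insert_index x0 x)) (\<beta> (insert_index y0 y)))"
    using x0 y0 by (intro eq_matI) (auto simp: mat_delete_def insert_index_def)
  have "det ?A = (\<Sum>j<k. ?A $$ (x0, j) * cofactor ?A x0 j)"
    by (rule laplace_expansion_row[OF mat_carrier x0])
  also have "\<dots> = cofactor ?A x0 y0"
    using x0 y0 row by (simp add: if_distrib[of "\<lambda>x. x * _"] cong: if_cong)
  also have "\<dots> = (-1) ^ (x0 + y0) *
      det (mat (k - 1) (k - 1) (\<lambda>(x, y). M (\<alpha> (insert_index x0 x)) (\<beta> (insert_index y0 y))))"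
    by (simp only: cofactor_def del)
  finally show ?thesis unfolding minor_def o_def .
qed

lemma minor_expand_column:
  assumes y0: "y0 < k" and fin: "finite P"
    and col: "\<And>i. i < k \<Longrightarrow> M (\<alpha> i) (\<beta> y0) = (\<Sum>p\<in>P. M (\<alpha> i) p * c p)"
  shows "minor M \<alpha> \<beta> k = (\<Sum>p\<in>P. c p * minor M \<alpha> (\<beta>(y0 := p)) k)"
proof -
  let ?A = "\<lambda>\<beta>. mat k k (\<lambda>(x, y). M (\<alpha> x) (\<beta> y))"
  have cof: "cofactor (?A (\<beta>(y0 := p))) i y0 = cofactor (?A \<beta>) i y0" for i p
  proof -
    have "mat_delete (?A (\<beta>(y0 := p))) i y0 = mat_delete (?A \<beta>) i y0"
      unfolding mat_delete_def by (rule eq_matI) auto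
    then show ?thesis unfolding cofactor_def by simp
  qed
  have expand: "det (?A \<gamma>) = (\<Sum>i<k. M (\<alpha> i) (\<gamma> y0) * cofactor (?A \<gamma>) i y0)" for \<gamma>
    using laplace_expansion_column[OF mat_carrier y0, of "\<lambda>(x, y). M (\<alpha> x) (\<gamma> y)"] y0 by simp
  have "det (?A \<beta>) = (\<Sum>i<k. \<Sum>p\<in>P. c p * (M (\<alpha> i) p * cofactor (?A \<beta>) i y0))"
    unfolding expand by (rule sum.cong) (simp_all add: col sum_distrib_right ac_simps)
  also have "\<dots> = (\<Sum>p\<in>P. c p * det (?A (\<beta>(y0 := p))))"
    by (subst sum.swap) (simp add: expand cof sum_distrib_left fun_upd_same del: fun_upd_apply)
  finally show ?thesis unfolding minor_def .
qed

lemma minor_sum_of_products: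
  fixes X Y :: "nat \<Rightarrow> nat \<Rightarrow> 'a::comm_ring_1"
  shows "minor (\<lambda>u v. \<Sum>s<n. X s u * Y s v) \<alpha> \<beta> k =
    (\<Sum>f\<in>Pi\<^sub>E {..<k} (\<lambda>_. {..<n}). (\<Prod>i<k. X (f i) (\<alpha> i)) * minor Y f \<beta> k)"
proof -
  let ?P = "{p. p permutes {..<k}}"
  let ?F = "Pi\<^sub>E {..<k} (\<lambda>_. {..<n})"
  have "minor (\<lambda>u v. \<Sum>s<n. X s u * Y s v) \<alpha> \<beta> k =
      (\<Sum>p\<in>?P. signof p * (\<Sum>f\<in>?F. \<Prod>i<k. X (f i) (\<alpha> i) * Y (f i) (\<beta> (p i))))"
    by (simp add: minor_leibniz prod_sum_PiE)
  also have "\<dots> = (\<Sum>f\<in>?F. \<Sum>p\<in>?P. (\<Prod>i<k. X (f i) (\<alpha> i)) * (signof p * (\<Prod>i<k. Y (f i) (\<beta> (p i)))))"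
    by (subst sum.swap) (simp add: sum_distrib_left prod.distrib ac_simps)
  finally show ?thesis
    by (simp add: minor_leibniz sum_distrib_left)
qed

lemma pick_inj_on: "finite S \<Longrightarrow> inj_on (pick S) {..<card S}"
  by (rule inj_onI) (metis card_pick_le lessThan_iff)

lemma pick_image: "finite S \<Longrightarrow> pick S ` {..<card S} = S"
proof
  assume "finite S"
  show "pick S ` {..<card S} \<subseteq> S" using pick_in_set_le by auto
  show "S \<subseteq> pick S ` {..<card S}"
  proof
    fix x assume x: "x \<in> S"
    then have "{a \<in> S. a < x} \<subset> S" by auto
    then have "card {a \<in> S. a < x} < card S" using \<open>finite S\<close> by (rule psubset_card_mono[rotated])
    then have "card {a \<in> S. a < x} \<in> {..<card S}" by simp
    moreover have "x = pick S (card {a \<in> S. a < x})" using pick_card_in_set[OF x] by simp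
    ultimately show "x \<in> pick S ` {..<card S}" by (rule rev_image_eqI)
  qed
qed

text \<open>An injection \<open>f :: {..<k} \<rightarrow> {..<n}\<close> is determined by its image \<open>S\<close> together with the
  permutation that sorts it: \<open>f i\<close> is the \<open>rank_perm k f i\<close>-th smallest element of \<open>S\<close>.\<close>

definition enum_perm :: "nat \<Rightarrow> nat set \<Rightarrow> (nat \<Rightarrow> nat) \<Rightarrow> nat \<Rightarrow> nat" where
  "enum_perm k S \<pi> = restrict (\<lambda>i. pick S (\<pi> i)) {..<k}"

definition rank_perm :: "nat \<Rightarrow> (nat \<Rightarrow> nat) \<Rightarrow> nat \<Rightarrow> nat" where
  "rank_perm k f = (\<lambda>x. if x < k then card {a \<in> f ` {..<k}. a < f x} else x)"

lemma enum_perm_props: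
  assumes S: "S \<subseteq> {..<n}" "card S = k" and \<pi>: "\<pi> permutes {..<k}"
  shows "enum_perm k S \<pi> ` {..<k} = S" "rank_perm k (enum_perm k S \<pi>) = \<pi>"
    "enum_perm k S \<pi> \<in> Pi\<^sub>E {..<k} (\<lambda>_. {..<n})" "inj_on (enum_perm k S \<pi>) {..<k}"
proof -
  have finS: "finite S" using S finite_subset by blast
  have pk: "\<pi> i < card S" if "i < k" for i using permutes_in_image[OF \<pi>] S that by auto
  have "(\<lambda>i. pick S (\<pi> i)) ` {..<k} = pick S ` (\<pi> ` {..<k})" by auto
  then show img: "enum_perm k S \<pi> ` {..<k} = S"
    using pick_image[OF finS] S permutes_image[OF \<pi>] by (simp add: enum_perm_def)
  show "rank_perm k (enum_perm k S \<pi>) = \<pi>"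
  proof
    fix x show "rank_perm k (enum_perm k S \<pi>) x = \<pi> x"
      using img pk[of x] permutes_others[OF \<pi>, of x]
      by (cases "x < k") (simp_all add: rank_perm_def enum_perm_def card_pick_le)
  qed
  have "pick S (\<pi> i) \<in> {..<n}" if "i < k" for i
    using pick_in_set_le[OF pk[OF that]] S by blast
  then show "enum_perm k S \<pi> \<in> Pi\<^sub>E {..<k} (\<lambda>_. {..<n})" by (auto simp: enum_perm_def)
  show "inj_on (enum_perm k S \<pi>) {..<k}"
  proof (rule inj_onI)
    fix x y assume xy: "x \<in> {..<k}" "y \<in> {..<k}" "enum_perm k S \<pi> x = enum_perm k S \<pi> y"
    then have "pick S (\<pi> x) = pick S (\<pi> y)" by (simp add: enum_perm_def)
    moreover have "\<pi> x \<in> {..<card S}" "\<pi> y \<in> {..<card S}" using xy pk by auto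
    ultimately have "\<pi> x = \<pi> y" using pick_inj_on[OF finS] by (meson inj_onD)
    then show "x = y" using permutes_inj[OF \<pi>] by (meson injD)
  qed
qed

lemma rank_perm_props:
  assumes f: "f \<in> Pi\<^sub>E {..<k} (\<lambda>_. {..<n})" "inj_on f {..<k}"
  shows "enum_perm k (f ` {..<k}) (rank_perm k f) = f" "f ` {..<k} \<subseteq> {..<n}"
    "card (f ` {..<k}) = k" "rank_perm k f permutes {..<k}"
proof -
  let ?S = "f ` {..<k}"
  show cardS: "card ?S = k" using f by (simp add: card_image)
  show "?S \<subseteq> {..<n}" using f by auto
  have pi_lt: "rank_perm k f x < k" if "x < k" for x
  proof -
    have "{a \<in> ?S. a < f x} \<subset> ?S" using that by auto
    then have "card {a \<in> ?S. a < f x} < card ?S" by (rule psubset_card_mono[rotated]) simp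
    then show ?thesis using that cardS by (simp add: rank_perm_def)
  qed
  have pick_pi: "pick ?S (rank_perm k f x) = f x" if "x < k" for x
    using that pick_card_in_set[of "f x" ?S] by (simp add: rank_perm_def)
  show "enum_perm k ?S (rank_perm k f) = f"
  proof
    fix x show "enum_perm k ?S (rank_perm k f) x = f x"
      using f pick_pi by (cases "x < k") (auto simp: enum_perm_def PiE_def extensional_def)
  qed
  have inj: "inj_on (rank_perm k f) {..<k}"
  proof (rule inj_onI)
    fix x y assume xy: "x \<in> {..<k}" "y \<in> {..<k}" "rank_perm k f x = rank_perm k f y"
    then have "f x = f y" using pick_pi by (metis lessThan_iff)
    then show "x = y" using f xy by (auto simp: inj_on_def)
  qed
  then have "rank_perm k f ` {..<k} = {..<k}"
    using pi_lt by (intro endo_inj_surj) auto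
  then show "rank_perm k f permutes {..<k}"
    using inj by (intro bij_imp_permutes) (auto simp: bij_betw_def rank_perm_def)
qed

lemma bij_betw_enum_perm:
  "bij_betw (\<lambda>(S, \<pi>). enum_perm k S \<pi>)
     (Sigma {S. S \<subseteq> {..<n} \<and> card S = k} (\<lambda>_. {\<pi>. \<pi> permutes {..<k}}))
     {f \<in> Pi\<^sub>E {..<k} (\<lambda>_. {..<n}). inj_on f {..<k}}"
    (is "bij_betw ?h ?D ?C")
proof (rule bij_betw_byWitness[where f' = "\<lambda>f. (f ` {..<k}, rank_perm k f)"])
  show "\<forall>Sp\<in>?D. (?h Sp ` {..<k}, rank_perm k (?h Sp)) = Sp"
  proof
    fix Sp assume "Sp \<in> ?D"
    then obtain S \<pi> where Sp: "Sp = (S, \<pi>)" "S \<subseteq> {..<n}" "card S = k" "\<pi> permutes {..<k}" by auto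
    show "(?h Sp ` {..<k}, rank_perm k (?h Sp)) = Sp" using enum_perm_props(1,2)[OF Sp(2-4)] Sp(1) by simp
  qed
  show "\<forall>f\<in>?C. ?h (f ` {..<k}, rank_perm k f) = f" using rank_perm_props(1) by auto
  show "?h ` ?D \<subseteq> ?C"
  proof
    fix f assume "f \<in> ?h ` ?D"
    then obtain S \<pi> where "f = enum_perm k S \<pi>" "S \<subseteq> {..<n}" "card S = k" "\<pi> permutes {..<k}" by auto
    then show "f \<in> ?C" using enum_perm_props(3,4) by simp
  qed
  show "(\<lambda>f. (f ` {..<k}, rank_perm k f)) ` ?C \<subseteq> ?D" using rank_perm_props(2,3,4) by auto
qed

theorem cauchy_binet_minor:
  fixes X Y :: "nat \<Rightarrow> nat \<Rightarrow> 'a::comm_ring_1"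
  shows "minor (\<lambda>u v. \<Sum>s<n. X s u * Y s v) \<alpha> \<beta> k =
    (\<Sum>S | S \<subseteq> {..<n} \<and> card S = k. minor X (pick S) \<alpha> k * minor Y (pick S) \<beta> k)"
proof -
  let ?SS = "{S. S \<subseteq> {..<n} \<and> card S = k}"
  let ?P = "{\<pi>. \<pi> permutes {..<k}}"
  let ?g = "\<lambda>f. (\<Prod>i<k. X (f i) (\<alpha> i)) * minor Y f \<beta> k"
  have finSS: "finite ?SS" by (rule finite_subset[of _ "Pow {..<n}"]) auto
  have "minor (\<lambda>u v. \<Sum>s<n. X s u * Y s v) \<alpha> \<beta> k =
      (\<Sum>f | f \<in> Pi\<^sub>E {..<k} (\<lambda>_. {..<n}) \<and> inj_on f {..<k}. ?g f)"
    unfolding minor_sum_of_products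
    by (rule sum.mono_neutral_right) (auto simp: minor_not_inj_rows intro: finite_PiE)
  also have "\<dots> = (\<Sum>(S, \<pi>)\<in>Sigma ?SS (\<lambda>_. ?P). ?g (enum_perm k S \<pi>))"
    using sum.reindex_bij_betw[OF bij_betw_enum_perm, of ?g] by (simp add: split_def)
  also have "\<dots> = (\<Sum>S\<in>?SS. \<Sum>\<pi>\<in>?P. ?g (enum_perm k S \<pi>))"
    by (rule sum.Sigma[symmetric]) (use finSS finite_permutations in auto)
  also have "\<dots> = (\<Sum>S\<in>?SS. \<Sum>\<pi>\<in>?P. signof \<pi> * (\<Prod>i<k. X (pick S (\<pi> i)) (\<alpha> i)) * minor Y (pick S) \<beta> k)"
  proof (intro sum.cong refl)
    fix S \<pi> assume \<pi>: "\<pi> \<in> ?P"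
    have "minor Y (enum_perm k S \<pi>) \<beta> k = minor Y (\<lambda>i. pick S (\<pi> i)) \<beta> k"
      unfolding minor_def by (intro arg_cong[where f = det] eq_matI) (auto simp: enum_perm_def)
    then show "?g (enum_perm k S \<pi>) = signof \<pi> * (\<Prod>i<k. X (pick S (\<pi> i)) (\<alpha> i)) * minor Y (pick S) \<beta> k"
      using \<pi> by (simp add: minor_permute_rows enum_perm_def ac_simps)
  qed
  also have "\<dots> = (\<Sum>S\<in>?SS. minor X (pick S) \<alpha> k * minor Y (pick S) \<beta> k)"
    by (simp add: sum_distrib_right[symmetric] minor_leibniz_columns)
  finally show ?thesis .
qed

section \<open>Variables of a polynomial\<close>

definition vars_within :: "'v set \<Rightarrow> (('v \<Rightarrow>\<^sub>0 nat) \<Rightarrow>\<^sub>0 'b::zero) \<Rightarrow> bool" where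
  "vars_within W p \<longleftrightarrow> (\<forall>m\<in>pkeys p. pkeys m \<subseteq> W)"

lemma vars_within_add:
  fixes p q :: "('v \<Rightarrow>\<^sub>0 nat) \<Rightarrow>\<^sub>0 'b::monoid_add"
  shows "vars_within W p \<Longrightarrow> vars_within W q \<Longrightarrow> vars_within W (p + q)"
  unfolding vars_within_def using keys_add[of p q] by blast

lemma vars_within_mult:
  fixes p q :: "('v \<Rightarrow>\<^sub>0 nat) \<Rightarrow>\<^sub>0 'b::semiring_0"
  assumes "vars_within W p" "vars_within W q"
  shows "vars_within W (p * q)"
  unfolding vars_within_def
proof
  fix m assume "m \<in> pkeys (p * q)"
  then obtain a b where "m = a + b" "a \<in> pkeys p" "b \<in> pkeys q" using keys_mult[of p q] by auto
  then show "pkeys m \<subseteq> W" using assms keys_add[of a b] unfolding vars_within_def by blast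
qed

lemma vars_within_sum:
  fixes f :: "'i \<Rightarrow> ('v \<Rightarrow>\<^sub>0 nat) \<Rightarrow>\<^sub>0 'b::comm_monoid_add"
  shows "(\<And>i. i \<in> I \<Longrightarrow> vars_within W (f i)) \<Longrightarrow> vars_within W (sum f I)"
  by (induction I rule: infinite_finite_induct)
    (simp_all add: vars_within_add, simp_all add: vars_within_def)

lemma vars_within_prod:
  fixes f :: "'i \<Rightarrow> ('v \<Rightarrow>\<^sub>0 nat) \<Rightarrow>\<^sub>0 'b::comm_semiring_1"
  shows "(\<And>i. i \<in> I \<Longrightarrow> vars_within W (f i)) \<Longrightarrow> vars_within W (prod f I)"
  by (induction I rule: infinite_finite_induct)
    (simp_all add: vars_within_mult, simp_all add: vars_within_def)

lemma vars_within_of_int: "vars_within W (of_int z :: ('v \<Rightarrow>\<^sub>0 nat) \<Rightarrow>\<^sub>0 'b::ring_1)"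
  unfolding vars_within_def by (auto simp: in_keys_iff lookup_of_int when_def split: if_splits)

lemma vars_within_Var: "x \<in> W \<Longrightarrow> vars_within W (Var x)"
  by (simp add: vars_within_def Var_def)

lemma vars_within_mono: "vars_within W p \<Longrightarrow> W \<subseteq> W' \<Longrightarrow> vars_within W' p"
  unfolding vars_within_def by blast

lemma vars_within_minor:
  fixes M :: "nat \<Rightarrow> nat \<Rightarrow> ('v \<Rightarrow>\<^sub>0 nat) \<Rightarrow>\<^sub>0 'b::comm_ring_1"
  assumes "\<And>i j. i < k \<Longrightarrow> j < k \<Longrightarrow> vars_within W (M (\<alpha> i) (\<beta> j))"
  shows "vars_within W (minor M \<alpha> \<beta> k)"
  unfolding minor_leibniz
proof (intro vars_within_sum vars_within_mult vars_within_prod)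
  fix p i assume "p \<in> {p. p permutes {..<k}}" "i \<in> {..<k}"
  then have "p i < k" using permutes_in_image by fastforce
  then show "vars_within W (M (\<alpha> i) (\<beta> (p i)))" using \<open>i \<in> {..<k}\<close> assms by simp
qed (simp add: vars_within_of_int)

definition path_vars :: "(nat \<times> nat) set \<Rightarrow> nat set \<Rightarrow> var set" where
  "path_vars E A = {Lam x y | x y. \<exists>a\<in>A. (y, a) \<in> E\<^sup>*}"

lemma vars_within_path_monomial:
  "dpath E p \<Longrightarrow> last p \<in> A \<Longrightarrow> vars_within (path_vars E A) (path_monomial p)"
proof (induction p rule: path_monomial.induct)
  case (1 x y r)
  then have "dpath E (y # r)" "last (y # r) \<in> A" by simp_all
  moreover have "Lam x y \<in> path_vars E A"
    using calculation dpath_mem_rtrancl_last[of E "y # r" y] unfolding path_vars_def by auto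
  ultimately show ?case using "1.IH" by (simp add: vars_within_mult vars_within_Var)
qed (simp_all add: vars_within_def)

lemma vars_within_path_sum: "a \<in> A \<Longrightarrow> vars_within (path_vars E A) (path_sum E s a)"
  unfolding path_sum_def by (rule vars_within_sum) (auto simp: paths_def intro: vars_within_path_monomial)

lemma vars_within_minor_path_sum: "vars_within (path_vars E (\<beta> ` {..<k})) (minor (path_sum E) \<alpha> \<beta> k)"
  by (rule vars_within_minor) (auto intro: vars_within_path_sum)

section \<open>Vertex-disjoint path systems\<close>

definition disjoint_path_systems :: "(nat \<times> nat) set \<Rightarrow> nat set \<Rightarrow> nat set \<Rightarrow> (nat \<Rightarrow> nat list) set" where
  "disjoint_path_systems E S A = {\<sigma>. \<sigma> \<in> extensional A \<and> (\<forall>a\<in>A. dpath E (\<sigma> a) \<and> last (\<sigma> a) = a) \<and>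
     (\<lambda>a. hd (\<sigma> a)) ` A = S \<and> (\<forall>a\<in>A. \<forall>b\<in>A. a \<noteq> b \<longrightarrow> set (\<sigma> a) \<inter> set (\<sigma> b) = {})}"

lemma disjoint_path_systemsD:
  assumes "\<sigma> \<in> disjoint_path_systems E S A"
  shows "\<sigma> \<in> extensional A" "\<And>a. a \<in> A \<Longrightarrow> dpath E (\<sigma> a)" "\<And>a. a \<in> A \<Longrightarrow> last (\<sigma> a) = a"
    "(\<lambda>a. hd (\<sigma> a)) ` A = S" "\<And>a b. a \<in> A \<Longrightarrow> b \<in> A \<Longrightarrow> a \<noteq> b \<Longrightarrow> set (\<sigma> a) \<inter> set (\<sigma> b) = {}"
  using assms unfolding disjoint_path_systems_def by auto

lemma disjoint_path_systemsI:
  assumes "\<sigma> \<in> extensional A" "\<And>a. a \<in> A \<Longrightarrow> dpath E (\<sigma> a)" "\<And>a. a \<in> A \<Longrightarrow> last (\<sigma> a) = a"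
    "(\<lambda>a. hd (\<sigma> a)) ` A = S" "\<And>a b. a \<in> A \<Longrightarrow> b \<in> A \<Longrightarrow> a \<noteq> b \<Longrightarrow> set (\<sigma> a) \<inter> set (\<sigma> b) = {}"
  shows "\<sigma> \<in> disjoint_path_systems E S A"
  using assms unfolding disjoint_path_systems_def by auto

lemma disjoint_path_systems_empty: "disjoint_path_systems E {} {} = {\<lambda>_. undefined}"
  unfolding disjoint_path_systems_def by (auto simp: extensional_def)

lemma inj_on_hd_disjoint_path_system:
  assumes "\<sigma> \<in> disjoint_path_systems E S A" shows "inj_on (\<lambda>a. hd (\<sigma> a)) A"
proof (rule inj_onI, rule ccontr)
  fix a b assume ab: "a \<in> A" "b \<in> A" "hd (\<sigma> a) = hd (\<sigma> b)" "a \<noteq> b"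
  then have "hd (\<sigma> a) \<in> set (\<sigma> a) \<inter> set (\<sigma> b)"
    using disjoint_path_systemsD(2)[OF assms] dpath_not_Nil by (metis IntI list.set_sel(1))
  then show False using disjoint_path_systemsD(5)[OF assms ab(1,2,4)] by auto
qed

lemma hd_dpath_in_nodes:
  assumes dag: "is_dag n E" and p: "dpath E p" shows "hd p \<in> insert (last p) {..<n}"
proof (cases "length p = 1")
  case True
  then show ?thesis by (metis insertI1 last_ConsL length_0_conv length_Suc_conv list.sel(1) One_nat_def)
next
  case False
  then have "1 < length p" using dpath_not_Nil[OF p] by (cases p) auto
  then have "(p ! 0, p ! 1) \<in> E" using p unfolding dpath_def by (metis One_nat_def)
  then show ?thesis using dag dpath_not_Nil[OF p] by (auto simp: is_dag_def hd_conv_nth)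
qed

lemma finite_disjoint_path_systems:
  assumes dag: "is_dag n E" and A: "finite A"
  shows "finite (disjoint_path_systems E S A)"
proof -
  have "disjoint_path_systems E S A \<subseteq> Pi\<^sub>E A (\<lambda>a. \<Union>s\<in>insert a {..<n}. paths E s a)"
  proof
    fix \<sigma> assume \<sigma>: "\<sigma> \<in> disjoint_path_systems E S A"
    show "\<sigma> \<in> Pi\<^sub>E A (\<lambda>a. \<Union>s\<in>insert a {..<n}. paths E s a)"
    proof (rule PiE_I)
      fix a assume a: "a \<in> A"
      note d = disjoint_path_systemsD(2,3)[OF \<sigma> a]
      then have "hd (\<sigma> a) \<in> insert a {..<n}" using hd_dpath_in_nodes[OF dag d(1)] by simp
      then show "\<sigma> a \<in> (\<Union>s\<in>insert a {..<n}. paths E s a)" using d by (auto simp: paths_def)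
    qed (use disjoint_path_systemsD(1)[OF \<sigma>] in \<open>auto simp: extensional_def\<close>)
  qed
  moreover have "finite (Pi\<^sub>E A (\<lambda>a. \<Union>s\<in>insert a {..<n}. paths E s a))"
    using A finite_paths[OF dag] by (intro finite_PiE) auto
  ultimately show ?thesis by (rule finite_subset)
qed

lemma not_in_dpath_if_not_reaching_last:
  assumes "dpath E p" "last p \<noteq> v" "(v, last p) \<notin> E\<^sup>+" shows "v \<notin> set p"
  using assms dpath_mem_rtrancl_last[of E p v] by (metis rtranclD)

lemma disjoint_insert_family:
  assumes "\<And>a b. a \<in> A \<Longrightarrow> b \<in> A \<Longrightarrow> a \<noteq> b \<Longrightarrow> F a \<inter> F b = {}"
    and "\<And>a. a \<in> A \<Longrightarrow> a \<noteq> v \<Longrightarrow> F v \<inter> F a = {}"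
    and "a \<in> insert v A" "b \<in> insert v A" "a \<noteq> b"
  shows "F a \<inter> F b = {}"
  using assms by (cases "a = v"; cases "b = v") (simp_all add: Int_commute)

context
  fixes E :: "(nat \<times> nat) set" and S A :: "nat set" and v :: nat
  assumes acyc: "acyclic E" and vS: "v \<in> S" and vA: "v \<in> A"
    and v_max: "\<And>a. a \<in> A \<Longrightarrow> (v, a) \<notin> E\<^sup>+"
begin

lemma disjoint_path_system_trivial_path:
  assumes \<sigma>: "\<sigma> \<in> disjoint_path_systems E S A" shows "\<sigma> v = [v]"
proof -
  obtain a where a: "a \<in> A" "hd (\<sigma> a) = v" using disjoint_path_systemsD(4)[OF \<sigma>] vS by auto
  note d = disjoint_path_systemsD(2,3)[OF \<sigma> a(1)]
  have "(v, a) \<in> E\<^sup>*" using dpath_hd_rtrancl_last[OF d(1)] a d by simp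
  then have "a = v" using v_max[OF a(1)] by (metis rtranclD)
  then show ?thesis using dpath_hd_eq_last[OF acyc d(1)] a d by simp
qed

lemma restrict_disjoint_path_system:
  assumes \<sigma>: "\<sigma> \<in> disjoint_path_systems E S A"
  shows "restrict \<sigma> (A - {v}) \<in> disjoint_path_systems E (S - {v}) (A - {v})"
proof -
  note D = disjoint_path_systemsD[OF \<sigma>] and triv = disjoint_path_system_trivial_path[OF \<sigma>]
  have "hd (\<sigma> a) \<noteq> v" if a: "a \<in> A - {v}" for a
  proof
    assume "hd (\<sigma> a) = v"
    then have "v \<in> set (\<sigma> a)" using D(2)[of a] a dpath_not_Nil by (metis DiffD1 list.set_sel(1))
    then show False using D(5)[of a v] a vA triv by auto
  qed
  moreover have "hd (\<sigma> a) \<noteq> v \<longrightarrow> a \<noteq> v" for a using triv by auto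
  ultimately have "(\<lambda>a. hd (\<sigma> a)) ` (A - {v}) = S - {v}" using D(4) by blast
  then show ?thesis using D by (intro disjoint_path_systemsI) auto
qed

lemma add_trivial_path_disjoint_path_system:
  assumes \<tau>: "\<tau> \<in> disjoint_path_systems E (S - {v}) (A - {v})"
  shows "\<tau>(v := [v]) \<in> disjoint_path_systems E S A"
proof -
  note D = disjoint_path_systemsD[OF \<tau>]
  have v_off: "v \<notin> set (\<tau> a)" if "a \<in> A - {v}" for a
    using that D(2,3) v_max by (intro not_in_dpath_if_not_reaching_last) auto
  have "(\<lambda>a. hd ((\<tau>(v := [v])) a)) ` A = insert v ((\<lambda>a. hd (\<tau> a)) ` (A - {v}))"
    using vA by force
  then have "(\<lambda>a. hd ((\<tau>(v := [v])) a)) ` A = S" using D(4) vS by auto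
  moreover have "set ((\<tau>(v := [v])) a) \<inter> set ((\<tau>(v := [v])) b) = {}"
    if "a \<in> A" "b \<in> A" "a \<noteq> b" for a b
    using disjoint_insert_family[of "A - {v}" "\<lambda>a. set ((\<tau>(v := [v])) a)" v a b] that vA v_off D(5)
    by (auto simp: insert_absorb)
  ultimately show ?thesis using D vA by (intro disjoint_path_systemsI) (auto simp: extensional_def)
qed

lemma bij_betw_remove_trivial_path:
  "bij_betw (\<lambda>\<sigma>. restrict \<sigma> (A - {v})) (disjoint_path_systems E S A)
     (disjoint_path_systems E (S - {v}) (A - {v}))"
proof (rule bij_betw_byWitness[where f' = "\<lambda>\<tau>. \<tau>(v := [v])"])
  show "\<forall>\<sigma>\<in>disjoint_path_systems E S A. (restrict \<sigma> (A - {v}))(v := [v]) = \<sigma>"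
    using disjoint_path_system_trivial_path disjoint_path_systemsD(1)
    by (fastforce simp: extensional_def)
  show "\<forall>\<tau>\<in>disjoint_path_systems E (S - {v}) (A - {v}). restrict (\<tau>(v := [v])) (A - {v}) = \<tau>"
    using disjoint_path_systemsD(1) by (fastforce simp: extensional_def)
qed (auto intro: restrict_disjoint_path_system add_trivial_path_disjoint_path_system)

end

text \<open>Removing the last edge \<open>p \<rightarrow> v\<close> of the path into \<open>v\<close> turns the sink \<open>v\<close> into the sink \<open>p\<close>.\<close>

definition split_last_edge :: "nat set \<Rightarrow> nat \<Rightarrow> (nat \<Rightarrow> nat list) \<Rightarrow> nat \<times> (nat \<Rightarrow> nat list)" where
  "split_last_edge A v \<sigma> =
    (last (butlast (\<sigma> v)), (restrict \<sigma> (A - {v}))(last (butlast (\<sigma> v)) := butlast (\<sigma> v)))"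

definition join_last_edge :: "nat set \<Rightarrow> nat \<Rightarrow> nat \<times> (nat \<Rightarrow> nat list) \<Rightarrow> (nat \<Rightarrow> nat list)" where
  "join_last_edge A v pt = (restrict (snd pt) (A - {v}))(v := snd pt (fst pt) @ [v])"

context
  fixes E :: "(nat \<times> nat) set" and S A :: "nat set" and v :: nat
  assumes acyc: "acyclic E" and vS: "v \<notin> S" and vA: "v \<in> A"
    and v_max: "\<And>a. a \<in> A \<Longrightarrow> (v, a) \<notin> E\<^sup>+"
begin

lemma last_edge_of_disjoint_path_system:
  assumes \<sigma>: "\<sigma> \<in> disjoint_path_systems E S A"
  defines "q \<equiv> butlast (\<sigma> v)"
  shows "q \<noteq> []" "\<sigma> v = q @ [v]" "dpath E q" "(last q, v) \<in> E" "last q \<notin> A" "hd q = hd (\<sigma> v)"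
proof -
  note D = disjoint_path_systemsD[OF \<sigma>]
  have d: "dpath E (\<sigma> v)" "last (\<sigma> v) = v" using D(2,3)[OF vA] by auto
  show qe: "\<sigma> v = q @ [v]" using d dpath_not_Nil unfolding q_def by (metis append_butlast_last_id)
  show q: "q \<noteq> []" using qe D(4) vA vS by (metis append_Nil image_eqI list.sel(1))
  show "dpath E q" "(last q, v) \<in> E" using d(1) qe q dpath_snoc[of E q v] by auto
  then have "last q \<noteq> v" using acyc by (auto simp: acyclic_def)
  moreover have "last q \<in> set (\<sigma> v)" using q qe by simp
  ultimately show "last q \<notin> A"
    using D(2,3,5) vA dpath_not_Nil by (metis disjoint_iff last_in_set)
  show "hd q = hd (\<sigma> v)" using qe q by simp
qed

lemma split_last_edge_disjoint_path_system:
  assumes \<sigma>: "\<sigma> \<in> disjoint_path_systems E S A"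
  shows "split_last_edge A v \<sigma> \<in> Sigma ({p. (p, v) \<in> E} - A) (\<lambda>p. disjoint_path_systems E S (insert p (A - {v})))"
proof -
  note D = disjoint_path_systemsD[OF \<sigma>] and L = last_edge_of_disjoint_path_system[OF \<sigma>]
  let ?q = "butlast (\<sigma> v)" let ?p = "last (butlast (\<sigma> v))"
  let ?\<sigma>' = "(restrict \<sigma> (A - {v}))(?p := ?q)"
  have val: "?\<sigma>' a = \<sigma> a" if "a \<in> A - {v}" for a using that L(5) by auto
  have sub: "set ?q \<subseteq> set (\<sigma> v)" by (meson in_set_butlastD subsetI)
  have "(\<lambda>a. hd (?\<sigma>' a)) ` insert ?p (A - {v}) = insert (hd ?q) ((\<lambda>a. hd (?\<sigma>' a)) ` (A - {v}))"
    by simp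
  also have "(\<lambda>a. hd (?\<sigma>' a)) ` (A - {v}) = (\<lambda>a. hd (\<sigma> a)) ` (A - {v})"
    by (rule image_cong[OF refl]) (simp only: val)
  also have "hd ?q = hd (\<sigma> v)" by (rule L(6))
  also have "insert (hd (\<sigma> v)) ((\<lambda>a. hd (\<sigma> a)) ` (A - {v})) = (\<lambda>a. hd (\<sigma> a)) ` A"
    using vA by blast
  finally have heads: "(\<lambda>a. hd (?\<sigma>' a)) ` insert ?p (A - {v}) = S" unfolding D(4)[symmetric] .
  have "set (?\<sigma>' a) \<inter> set (?\<sigma>' c) = {}"
    if "a \<in> insert ?p (A - {v})" "c \<in> insert ?p (A - {v})" "a \<noteq> c" for a c
  proof (rule disjoint_insert_family[OF _ _ that])
    fix a b assume "a \<in> A - {v}" "b \<in> A - {v}" "a \<noteq> b"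
    then show "set (?\<sigma>' a) \<inter> set (?\<sigma>' b) = {}" using val D(5)[of a b] by simp
  next
    fix a assume a: "a \<in> A - {v}" "a \<noteq> ?p"
    have "set (\<sigma> v) \<inter> set (\<sigma> a) = {}" using D(5)[OF vA, of a] a by auto
    then show "set (?\<sigma>' ?p) \<inter> set (?\<sigma>' a) = {}" using val[OF a(1)] sub by auto
  qed
  moreover have "dpath E (?\<sigma>' a)" "last (?\<sigma>' a) = a" if "a \<in> insert ?p (A - {v})" for a
    using that L D(2,3) val by (cases "a = ?p"; auto)+
  ultimately have "?\<sigma>' \<in> disjoint_path_systems E S (insert ?p (A - {v}))"
    using heads by (intro disjoint_path_systemsI) (auto simp: extensional_def)
  then show ?thesis using L by (simp add: split_last_edge_def)
qed

lemma join_last_edge_disjoint_path_system: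
  assumes pv: "(p, v) \<in> E" "p \<notin> A" and \<tau>: "\<tau> \<in> disjoint_path_systems E S (insert p (A - {v}))"
  shows "join_last_edge A v (p, \<tau>) \<in> disjoint_path_systems E S A"
proof -
  let ?\<sigma> = "join_last_edge A v (p, \<tau>)"
  note D = disjoint_path_systemsD[OF \<tau>]
  have sv: "?\<sigma> v = \<tau> p @ [v]" by (simp add: join_last_edge_def)
  have so: "?\<sigma> a = \<tau> a" if "a \<in> A - {v}" for a using that by (simp add: join_last_edge_def)
  have tp: "dpath E (\<tau> p)" "last (\<tau> p) = p" using D(2,3) by auto
  have v_off: "v \<notin> set (\<tau> a)" if "a \<in> A - {v}" for a
    using that D(2,3) v_max by (intro not_in_dpath_if_not_reaching_last) auto
  have paths: "dpath E (?\<sigma> a) \<and> last (?\<sigma> a) = a" if "a \<in> A" for a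
  proof (cases "a = v")
    case True
    have "dpath E (\<tau> p @ [v])" using tp pv(1) dpath_snoc by auto
    then show ?thesis using True sv by simp
  next
    case False
    then show ?thesis using so[of a] that D(2,3)[of a] by auto
  qed
  have "(\<lambda>a. hd (?\<sigma> a)) ` A = (\<lambda>a. hd (?\<sigma> a)) ` insert v (A - {v})"
    using vA by (simp add: insert_absorb)
  also have "\<dots> = insert (hd (?\<sigma> v)) ((\<lambda>a. hd (?\<sigma> a)) ` (A - {v}))" by (simp only: image_insert)
  also have "hd (?\<sigma> v) = hd (\<tau> p)" using sv tp dpath_not_Nil by auto
  also have "(\<lambda>a. hd (?\<sigma> a)) ` (A - {v}) = (\<lambda>a. hd (\<tau> a)) ` (A - {v})"
    by (rule image_cong[OF refl]) (simp only: so)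
  also have "insert (hd (\<tau> p)) ((\<lambda>a. hd (\<tau> a)) ` (A - {v})) = (\<lambda>a. hd (\<tau> a)) ` insert p (A - {v})"
    by simp
  finally have heads: "(\<lambda>a. hd (?\<sigma> a)) ` A = S" unfolding D(4) .
  have from_v: "set (?\<sigma> v) \<inter> set (?\<sigma> x) = {}" if x: "x \<in> A - {v}" for x
  proof -
    have "set (\<tau> p) \<inter> set (\<tau> x) = {}" using D(5)[of p x] x pv(2) by auto
    then show ?thesis using sv so[OF x] v_off[OF x] by auto
  qed
  have "set (?\<sigma> a) \<inter> set (?\<sigma> c) = {}" if "a \<in> A" "c \<in> A" "a \<noteq> c" for a c
    using disjoint_insert_family[of "A - {v}" "\<lambda>a. set (?\<sigma> a)" v a c] that vA from_v so D(5)
    by (auto simp: insert_absorb)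
  moreover have "?\<sigma> \<in> extensional A"
    using vA D(1) by (auto simp: join_last_edge_def extensional_def)
  ultimately show ?thesis using paths heads by (intro disjoint_path_systemsI) auto
qed

lemma bij_betw_split_last_edge:
  "bij_betw (split_last_edge A v) (disjoint_path_systems E S A)
     (Sigma ({p. (p, v) \<in> E} - A) (\<lambda>p. disjoint_path_systems E S (insert p (A - {v}))))"
proof (rule bij_betw_byWitness[where f' = "join_last_edge A v"])
  show "\<forall>\<sigma>\<in>disjoint_path_systems E S A. join_last_edge A v (split_last_edge A v \<sigma>) = \<sigma>"
  proof
    fix \<sigma> assume \<sigma>: "\<sigma> \<in> disjoint_path_systems E S A"
    show "join_last_edge A v (split_last_edge A v \<sigma>) = \<sigma>"
      using last_edge_of_disjoint_path_system[OF \<sigma>] disjoint_path_systemsD(1)[OF \<sigma>]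
      by (auto simp: join_last_edge_def split_last_edge_def extensional_def)
  qed
  show "\<forall>pt\<in>Sigma ({p. (p, v) \<in> E} - A) (\<lambda>p. disjoint_path_systems E S (insert p (A - {v}))).
      split_last_edge A v (join_last_edge A v pt) = pt"
  proof
    fix pt assume "pt \<in> Sigma ({p. (p, v) \<in> E} - A) (\<lambda>p. disjoint_path_systems E S (insert p (A - {v})))"
    then obtain p \<tau> where pt: "pt = (p, \<tau>)" "p \<notin> A" "\<tau> \<in> disjoint_path_systems E S (insert p (A - {v}))"
      by auto
    note D = disjoint_path_systemsD[OF pt(3)]
    have "last (\<tau> p) = p" using D(3) by simp
    then show "split_last_edge A v (join_last_edge A v pt) = pt"
      using pt D(1) vA by (auto simp: join_last_edge_def split_last_edge_def extensional_def)
  qed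
  show "split_last_edge A v ` disjoint_path_systems E S A \<subseteq>
      Sigma ({p. (p, v) \<in> E} - A) (\<lambda>p. disjoint_path_systems E S (insert p (A - {v})))"
    using split_last_edge_disjoint_path_system by blast
  show "join_last_edge A v ` Sigma ({p. (p, v) \<in> E} - A) (\<lambda>p. disjoint_path_systems E S (insert p (A - {v})))
      \<subseteq> disjoint_path_systems E S A"
    using join_last_edge_disjoint_path_system by auto
qed

end

section \<open>Monomials of minors of the path matrix\<close>

lemma card_keys_sum_Var_mult:
  fixes f :: "'i \<Rightarrow> rpoly"
  assumes fin: "finite P" and inj: "inj_on x P"
    and avoid: "\<And>p q. p \<in> P \<Longrightarrow> q \<in> P \<Longrightarrow> vars_within (- {x q}) (f p)"
  shows "card (pkeys (\<Sum>p\<in>P. Var (x p) * f p)) = (\<Sum>p\<in>P. card (pkeys (f p)))"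
proof -
  have degree: "plookup m (x q) = of_bool (p = q)"
    if pq: "p \<in> P" "q \<in> P" and m: "m \<in> pkeys (Var (x p) * f p)" for p q m
  proof -
    obtain m' where "m = Poly_Mapping.single (x p) 1 + m'" "m' \<in> pkeys (f p)"
      using m keys_single_one_mult[of "Poly_Mapping.single (x p) 1" "f p"] by (auto simp: Var_def)
    moreover have "plookup m' (x q) = 0" using avoid[OF pq] calculation(2)
      by (auto simp: vars_within_def in_keys_iff)
    ultimately show ?thesis using inj pq by (auto simp: lookup_add lookup_single inj_on_def when_def)
  qed
  have "pkeys (Var (x p) * f p) \<inter> pkeys (Var (x q) * f q) = {}" if "p \<in> P" "q \<in> P" "p \<noteq> q" for p q
    using degree[of p q] degree[of q q] that by fastforce
  then show ?thesis
    by (simp add: card_keys_sum_disjoint[OF fin] Var_def card_keys_single_one_mult)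
qed

definition num_ancestors :: "(nat \<times> nat) set \<Rightarrow> nat \<Rightarrow> nat" where
  "num_ancestors E a = card {x. (x, a) \<in> E\<^sup>+}"

lemma finite_ancestors:
  assumes dag: "is_dag n E" shows "finite {x. (x, a) \<in> E\<^sup>+}"
proof (rule finite_subset)
  show "{x. (x, a) \<in> E\<^sup>+} \<subseteq> {..<n}"
  proof
    fix x assume "x \<in> {x. (x, a) \<in> E\<^sup>+}"
    then obtain y where "(x, y) \<in> E" by (auto elim: converse_tranclE)
    then show "x \<in> {..<n}" using dag unfolding is_dag_def by auto
  qed
qed simp

lemma num_ancestors_less:
  assumes dag: "is_dag n E" and e: "(p, v) \<in> E\<^sup>+"
  shows "num_ancestors E p < num_ancestors E v"
proof -
  have "insert p {x. (x, p) \<in> E\<^sup>+} \<subseteq> {x. (x, v) \<in> E\<^sup>+}" using e by auto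
  moreover have p: "p \<notin> {x. (x, p) \<in> E\<^sup>+}" using dag by (auto simp: is_dag_def acyclic_def)
  ultimately have "card (insert p {x. (x, p) \<in> E\<^sup>+}) \<le> card {x. (x, v) \<in> E\<^sup>+}"
    using finite_ancestors[OF dag] by (intro card_mono) auto
  then show ?thesis using finite_ancestors[OF dag, of p] p by (simp add: num_ancestors_def)
qed

lemma minor_path_sum_shared_node:
  assumes acyc: "acyclic E" and inj: "inj_on \<beta> {..<k}"
    and x0: "x0 < k" and y0: "y0 < k" and shared: "\<alpha> x0 = \<beta> y0"
    and v_max: "\<And>j. j < k \<Longrightarrow> (\<beta> y0, \<beta> j) \<notin> E\<^sup>+"
  shows "minor (path_sum E) \<alpha> \<beta> k =
    (-1) ^ (x0 + y0) * minor (path_sum E) (\<alpha> \<circ> insert_index x0) (\<beta> \<circ> insert_index y0) (k - 1)"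
proof (rule minor_unit_row[OF x0 y0])
  fix j assume j: "j < k"
  show "path_sum E (\<alpha> x0) (\<beta> j) = of_bool (j = y0)"
  proof (cases "j = y0")
    case False
    then have "\<beta> j \<noteq> \<beta> y0" using inj j y0 by (auto dest: inj_onD)
    then have "(\<beta> y0, \<beta> j) \<notin> E\<^sup>*" using v_max[OF j] by (metis rtranclD)
    then show ?thesis using False shared by (simp add: path_sum_eq_0)
  qed (simp add: shared path_sum_self[OF acyc])
qed

lemma minor_path_sum_last_edge:
  assumes dag: "is_dag n E" and y0: "y0 < k" and new: "\<beta> y0 \<notin> \<alpha> ` {..<k}"
  shows "minor (path_sum E) \<alpha> \<beta> k =
    (\<Sum>p\<in>{p. (p, \<beta> y0) \<in> E} - \<beta> ` {..<k}. Var (Lam p (\<beta> y0)) * minor (path_sum E) \<alpha> (\<beta>(y0 := p)) k)"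
proof -
  let ?v = "\<beta> y0" let ?pa = "{p. (p, \<beta> y0) \<in> E}"
  have "minor (path_sum E) \<alpha> \<beta> k = (\<Sum>p\<in>?pa. Var (Lam p ?v) * minor (path_sum E) \<alpha> (\<beta>(y0 := p)) k)"
  proof (rule minor_expand_column[OF y0 finite_parents[OF dag]])
    fix i assume "i < k"
    then have "\<alpha> i \<noteq> ?v" using new by (metis image_eqI lessThan_iff)
    then show "path_sum E (\<alpha> i) ?v = (\<Sum>p\<in>?pa. path_sum E (\<alpha> i) p * Var (Lam p ?v))"
      using path_sum_last_edge[OF dag, of "\<alpha> i" ?v] by simp
  qed
  also have "\<dots> = (\<Sum>p\<in>?pa - \<beta> ` {..<k}. Var (Lam p ?v) * minor (path_sum E) \<alpha> (\<beta>(y0 := p)) k)"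
  proof (rule sum.mono_neutral_right[OF finite_parents[OF dag]], blast, rule ballI)
    fix p assume "p \<in> ?pa - (?pa - \<beta> ` {..<k})"
    then obtain y1 where y1: "y1 < k" "\<beta> y1 = p" "(p, ?v) \<in> E" by auto
    then have "y1 \<noteq> y0" using dag by (auto simp: is_dag_def acyclic_def)
    then have "minor (path_sum E) \<alpha> (\<beta>(y0 := p)) k = 0"
      using y0 y1 by (intro minor_identical_columns[of y0 k y1]) auto
    then show "Var (Lam p ?v) * minor (path_sum E) \<alpha> (\<beta>(y0 := p)) k = 0" by simp
  qed
  finally show ?thesis .
qed

lemma inj_on_insert_index: "inj_on (insert_index x0) A"
  by (rule inj_onI) (auto simp: insert_index_def split: if_splits)

lemma insert_index_image:
  assumes "x0 < k" shows "insert_index x0 ` {..<k - 1} = {..<k} - {x0}"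
proof
  show "insert_index x0 ` {..<k - 1} \<subseteq> {..<k} - {x0}" by (auto simp: insert_index_def)
  show "{..<k} - {x0} \<subseteq> insert_index x0 ` {..<k - 1}"
  proof
    fix j assume j: "j \<in> {..<k} - {x0}"
    show "j \<in> insert_index x0 ` {..<k - 1}"
    proof (cases "j < x0")
      case True
      then have "j = insert_index x0 j" "j < k - 1" using assms by (simp_all add: insert_index_def)
      then show ?thesis by blast
    next
      case False
      then have "j = insert_index x0 (j - 1)" "j - 1 < k - 1" using j by (auto simp: insert_index_def)
      then show ?thesis by blast
    qed
  qed
qed

lemma inj_on_comp_insert_index:
  assumes "inj_on f {..<k}" "x0 < k"
  shows "inj_on (f \<circ> insert_index x0) {..<k - 1}"
    "(f \<circ> insert_index x0) ` {..<k - 1} = f ` {..<k} - {f x0}"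
proof -
  note img = insert_index_image[OF assms(2)]
  have "inj_on f (insert_index x0 ` {..<k - 1})" using assms(1) img by (auto intro: inj_on_subset)
  then show "inj_on (f \<circ> insert_index x0) {..<k - 1}" by (rule comp_inj_on[OF inj_on_insert_index])
  have "(f \<circ> insert_index x0) ` {..<k - 1} = f ` (insert_index x0 ` {..<k - 1})"
    by (rule image_comp[symmetric])
  also have "\<dots> = f ` ({..<k} - {x0})" by (simp only: img)
  also have "\<dots> = f ` {..<k} - {f x0}" using assms by (simp add: inj_on_image_set_diff)
  finally show "(f \<circ> insert_index x0) ` {..<k - 1} = f ` {..<k} - {f x0}" .
qed

lemma inj_on_fun_upd_fresh:
  assumes "inj_on \<beta> {..<k}" "y0 < k" "p \<notin> \<beta> ` {..<k}"
  shows "inj_on (\<beta>(y0 := p)) {..<k}" "(\<beta>(y0 := p)) ` {..<k} = insert p (\<beta> ` {..<k} - {\<beta> y0})"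
proof -
  have "\<beta> ` ({..<k} - {y0}) = \<beta> ` {..<k} - {\<beta> y0}" using assms(1,2) by (simp add: inj_on_image_set_diff)
  moreover have "(\<beta>(y0 := p)) ` {..<k} = insert p (\<beta> ` ({..<k} - {y0}))"
    using assms(2) by (auto simp: image_iff)
  ultimately show "(\<beta>(y0 := p)) ` {..<k} = insert p (\<beta> ` {..<k} - {\<beta> y0})" by simp
  show "inj_on (\<beta>(y0 := p)) {..<k}"
    using assms by (auto simp: inj_on_def)
qed

lemma sum_insert_index_le:
  fixes f :: "nat \<Rightarrow> nat"
  assumes "x0 < k" shows "(\<Sum>i<k - 1. f (insert_index x0 i)) \<le> (\<Sum>i<k. f i)"
proof -
  have "(\<Sum>i<k - 1. f (insert_index x0 i)) = (\<Sum>j\<in>{..<k} - {x0}. f j)"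
    using sum.reindex[OF inj_on_insert_index, of f x0 "{..<k - 1}"]
    unfolding insert_index_image[OF assms] by (simp add: o_def)
  also have "\<dots> \<le> (\<Sum>j<k. f j)" by (rule sum_mono2) auto
  finally show ?thesis .
qed

lemma sum_fun_upd_less:
  fixes f :: "'a \<Rightarrow> nat"
  assumes "finite I" "y0 \<in> I" "f p < f (g y0)"
  shows "(\<Sum>i\<in>I. f ((g(y0 := p)) i)) < (\<Sum>i\<in>I. f (g i))"
proof -
  have "(\<Sum>i\<in>I. f ((g(y0 := p)) i)) = f p + (\<Sum>i\<in>I - {y0}. f (g i))"
    "(\<Sum>i\<in>I. f (g i)) = f (g y0) + (\<Sum>i\<in>I - {y0}. f (g i))"
    using assms(1,2) by (simp_all add: sum.remove)
  then show ?thesis using assms(3) by simp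
qed

lemma ex_max_below:
  fixes f :: "nat \<Rightarrow> 'a::linorder"
  assumes "k \<noteq> 0" shows "\<exists>y0<k. \<forall>j<k. f j \<le> f y0"
proof -
  have ne: "f ` {..<k} \<noteq> {}" using assms by auto
  obtain y0 where "y0 < k" "f y0 = Max (f ` {..<k})" using Max_in[OF _ ne] by auto
  then show ?thesis by auto
qed

lemma ex_sink_not_reaching_sinks:
  fixes \<beta> :: "nat \<Rightarrow> nat"
  assumes dag: "is_dag n E" and "k \<noteq> 0"
  shows "\<exists>y0<k. \<forall>j<k. (\<beta> y0, \<beta> j) \<notin> E\<^sup>+"
proof -
  obtain y0 where "y0 < k" "\<forall>j<k. num_ancestors E (\<beta> j) \<le> num_ancestors E (\<beta> y0)"
    using ex_max_below[OF assms(2), of "\<lambda>j. num_ancestors E (\<beta> j)"] by blast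
  then show ?thesis using num_ancestors_less[OF dag] leD by blast
qed

lemma card_keys_minor_path_sum_last_edge:
  assumes dag: "is_dag n E" and inj: "inj_on \<beta> {..<k}" and y0: "y0 < k" and new: "\<beta> y0 \<notin> \<alpha> ` {..<k}"
    and v_max: "\<And>j. j < k \<Longrightarrow> (\<beta> y0, \<beta> j) \<notin> E\<^sup>+"
  shows "card (pkeys (minor (path_sum E) \<alpha> \<beta> k)) =
    (\<Sum>p\<in>{p. (p, \<beta> y0) \<in> E} - \<beta> ` {..<k}. card (pkeys (minor (path_sum E) \<alpha> (\<beta>(y0 := p)) k)))"
proof -
  let ?v = "\<beta> y0" and ?P = "{p. (p, \<beta> y0) \<in> E} - \<beta> ` {..<k}"
  have avoid: "vars_within (- {Lam q ?v}) (minor (path_sum E) \<alpha> (\<beta>(y0 := p)) k)" if p: "p \<in> ?P" for p q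
  proof (rule vars_within_mono[OF vars_within_minor_path_sum])
    have "(?v, p) \<notin> E\<^sup>*" using p dag rtrancl_into_trancl1[of ?v p E ?v] by (auto simp: is_dag_def acyclic_def)
    moreover have "(?v, a) \<notin> E\<^sup>*" if "a \<in> \<beta> ` {..<k} - {?v}" for a
      using that v_max by (auto dest: rtranclD)
    ultimately show "path_vars E ((\<beta>(y0 := p)) ` {..<k}) \<subseteq> - {Lam q ?v}"
      using inj_on_fun_upd_fresh(2)[OF inj y0] p by (auto simp: path_vars_def)
  qed
  show ?thesis
    unfolding minor_path_sum_last_edge[where \<alpha> = \<alpha> and \<beta> = \<beta>, OF dag y0 new]
    by (rule card_keys_sum_Var_mult) (auto simp: finite_parents[OF dag] inj_on_def avoid)
qed

lemma card_disjoint_path_systems_last_edge: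
  assumes dag: "is_dag n E" and "v \<notin> S" "v \<in> A" "finite A" and v_max: "\<And>a. a \<in> A \<Longrightarrow> (v, a) \<notin> E\<^sup>+"
  shows "card (disjoint_path_systems E S A) =
    (\<Sum>p\<in>{p. (p, v) \<in> E} - A. card (disjoint_path_systems E S (insert p (A - {v}))))"
proof -
  have acyc: "acyclic E" using dag by (simp add: is_dag_def)
  have "card (disjoint_path_systems E S A) =
      card (Sigma ({p. (p, v) \<in> E} - A) (\<lambda>p. disjoint_path_systems E S (insert p (A - {v}))))"
    by (rule bij_betw_same_card[OF bij_betw_split_last_edge[OF acyc assms(2,3) v_max]])
  also have "\<dots> = (\<Sum>p\<in>{p. (p, v) \<in> E} - A. card (disjoint_path_systems E S (insert p (A - {v}))))"
    using finite_parents[OF dag, of v] assms(4)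
    by (intro card_SigmaI) (auto intro: finite_disjoint_path_systems[OF dag])
  finally show ?thesis .
qed

text \<open>No cancellation occurs in the Lindstroem-Gessel-Viennot expansion of a minor of the path
  matrix: every system of vertex-disjoint paths from the rows to the columns contributes its own
  monomial. The proof expands along the column of a sink \<open>v\<close> with the most ancestors, so that no
  path leaves \<open>v\<close> towards another sink. If \<open>v\<close> is also a source, its row is a unit vector and
  every path system uses the trivial path at \<open>v\<close>. Otherwise the expansion is indexed by the last
  edge \<open>p \<rightarrow> v\<close>, and the variable \<open>\<lambda>\<^sub>p\<^sub>v\<close> occurs in no other term, because \<open>v\<close> reaches none of
  the remaining sinks.\<close>

theorem card_keys_minor_path_sum:
  assumes dag: "is_dag n E"
  shows "inj_on \<alpha> {..<k} \<Longrightarrow> inj_on \<beta> {..<k} \<Longrightarrow>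
    card (pkeys (minor (path_sum E) \<alpha> \<beta> k)) = card (disjoint_path_systems E (\<alpha> ` {..<k}) (\<beta> ` {..<k}))"
proof (induction "k + (\<Sum>i<k. num_ancestors E (\<beta> i))" arbitrary: k \<alpha> \<beta> rule: less_induct)
  case less
  have acyc: "acyclic E" using dag by (simp add: is_dag_def)
  show ?case
  proof (cases "k = 0")
    case True
    have "minor (path_sum E) \<alpha> \<beta> 0 = 1" unfolding minor_def by (rule det_dim_zero) simp
    then show ?thesis using True by (simp add: disjoint_path_systems_empty)
  next
    case False
    obtain y0 where y0: "y0 < k" "\<forall>j<k. (\<beta> y0, \<beta> j) \<notin> E\<^sup>+"
      using ex_sink_not_reaching_sinks[OF dag False] by blast
    define A where "A = \<beta> ` {..<k}"
    define S where "S = \<alpha> ` {..<k}"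
    define v where "v = \<beta> y0"
    have vA: "v \<in> A" using y0 by (simp add: A_def v_def)
    have v_max: "(v, a) \<notin> E\<^sup>+" if "a \<in> A" for a
      using that y0(2) by (auto simp: A_def v_def)
    show ?thesis
    proof (cases "v \<in> S")
      case True
      then obtain x0 where x0: "x0 < k" "\<alpha> x0 = v" by (auto simp: S_def)
      note ia = inj_on_comp_insert_index[OF less.prems(1) x0(1)]
        and ib = inj_on_comp_insert_index[OF less.prems(2) y0(1)]
      have "(k - 1) + (\<Sum>i<k - 1. num_ancestors E ((\<beta> \<circ> insert_index y0) i)) <
          k + (\<Sum>i<k. num_ancestors E (\<beta> i))"
        using sum_insert_index_le[OF y0(1), of "\<lambda>j. num_ancestors E (\<beta> j)"] False by simp
      then have "card (pkeys (minor (path_sum E) (\<alpha> \<circ> insert_index x0) (\<beta> \<circ> insert_index y0) (k - 1))) =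
          card (disjoint_path_systems E (S - {v}) (A - {v}))"
        using less.hyps[OF _ ia(1) ib(1)] ia(2) ib(2) x0(2) by (simp add: S_def A_def v_def)
      moreover have "card (disjoint_path_systems E S A) = card (disjoint_path_systems E (S - {v}) (A - {v}))"
        by (rule bij_betw_same_card[OF bij_betw_remove_trivial_path[OF acyc True vA v_max]])
      ultimately show ?thesis
        using minor_path_sum_shared_node[OF acyc less.prems(2) x0(1) y0(1)] x0(2) v_max
        by (simp add: keys_neg_one_power_mult S_def A_def v_def)
    next
      case False
      have IH: "card (pkeys (minor (path_sum E) \<alpha> (\<beta>(y0 := p)) k)) =
          card (disjoint_path_systems E S (insert p (A - {v})))" if p: "p \<in> {p. (p, v) \<in> E} - A" for p
      proof -
        note fresh = inj_on_fun_upd_fresh[OF less.prems(2) y0(1), of p]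
        have "num_ancestors E p < num_ancestors E (\<beta> y0)"
          using p num_ancestors_less[OF dag, of p v] by (auto simp: v_def)
        then have "k + (\<Sum>i<k. num_ancestors E ((\<beta>(y0 := p)) i)) < k + (\<Sum>i<k. num_ancestors E (\<beta> i))"
          using sum_fun_upd_less[of "{..<k}" y0 "num_ancestors E"] y0(1) by simp
        then show ?thesis
          using less.hyps[OF _ less.prems(1) fresh(1)] fresh(2) p by (simp add: S_def A_def v_def)
      qed
      have "card (pkeys (minor (path_sum E) \<alpha> \<beta> k)) =
          (\<Sum>p\<in>{p. (p, v) \<in> E} - A. card (pkeys (minor (path_sum E) \<alpha> (\<beta>(y0 := p)) k)))"
        using card_keys_minor_path_sum_last_edge[OF dag less.prems(2) y0(1)] False v_max
        by (simp add: S_def A_def v_def)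
      also have "\<dots> = card (disjoint_path_systems E S A)"
        using IH card_disjoint_path_systems_last_edge[OF dag False vA _ v_max] by (simp add: A_def)
      finally show ?thesis by (simp add: S_def A_def)
    qed
  qed
qed

section \<open>Monomial minors of the covariance matrix\<close>

definition omega_monomial :: "nat set \<Rightarrow> var \<Rightarrow>\<^sub>0 nat" where
  "omega_monomial S = (\<Sum>s\<in>S. Poly_Mapping.single (Om s) 1)"

lemma prod_Var_Om: "finite S \<Longrightarrow> (\<Prod>s\<in>S. Var (Om s)) = Poly_Mapping.single (omega_monomial S) 1"
proof (induction S rule: finite_induct)
  case empty then show ?case by (simp add: omega_monomial_def one_poly_mapping.abs_eq single.abs_eq)
next
  case (insert x F) then show ?case by (simp add: omega_monomial_def Var_def mult_single)
qed

lemma lookup_omega_monomial: "finite S \<Longrightarrow> plookup (omega_monomial S) (Om t) = of_bool (t \<in> S)"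
  by (simp add: omega_monomial_def lookup_sum lookup_single when_def)

lemma keys_omega_monomial_mult_disjoint:
  fixes p q :: rpoly
  assumes "finite S" "finite S'" "S \<noteq> S'"
    and "vars_within (range (case_prod Lam)) p" "vars_within (range (case_prod Lam)) q"
  shows "pkeys (Poly_Mapping.single (omega_monomial S) 1 * p) \<inter>
    pkeys (Poly_Mapping.single (omega_monomial S') 1 * q) = {}"
proof -
  obtain s where s: "(s \<in> S) \<noteq> (s \<in> S')" using assms(3) by blast
  have "plookup m (Om s) = of_bool (s \<in> T)"
    if T: "finite T" and r: "vars_within (range (case_prod Lam)) r"
      and m: "m \<in> pkeys (Poly_Mapping.single (omega_monomial T) 1 * r)"
    for T and r :: rpoly and m
  proof -
    obtain m' where m': "m = omega_monomial T + m'" "m' \<in> pkeys r"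
      using m keys_single_one_mult[of "omega_monomial T" r] by auto
    have "Om s \<notin> range (case_prod Lam)" by auto
    then have "Om s \<notin> pkeys m'" using r m'(2) unfolding vars_within_def by blast
    then show ?thesis using m'(1) lookup_omega_monomial[OF T] by (simp add: lookup_add in_keys_iff)
  qed
  note Om_degree = this
  show ?thesis
  proof (rule equals0I)
    fix m assume "m \<in> pkeys (Poly_Mapping.single (omega_monomial S) 1 * p) \<inter>
      pkeys (Poly_Mapping.single (omega_monomial S') 1 * q)"
    then have m: "m \<in> pkeys (Poly_Mapping.single (omega_monomial S) 1 * p)"
      "m \<in> pkeys (Poly_Mapping.single (omega_monomial S') 1 * q)" by simp_all
    show False
      using Om_degree[OF assms(1,4) m(1)] Om_degree[OF assms(2,5) m(2)] s by (cases "s \<in> S'") simp_all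
  qed
qed

lemma vars_within_minor_path_sum_Lam:
  "vars_within (range (case_prod Lam)) (minor (path_sum E) \<alpha> \<beta> k)"
  by (rule vars_within_mono[OF vars_within_minor_path_sum]) (auto simp: path_vars_def)

lemma det_submatrix_phi_Sigma:
  assumes dag: "is_dag n E" and A: "A \<subseteq> {..<n}" "card A = k" and B: "B \<subseteq> {..<n}" "card B = k"
  shows "det (submatrix (phi_Sigma n E) A B) =
    (\<Sum>S | S \<subseteq> {..<n} \<and> card S = k. Poly_Mapping.single (omega_monomial S) 1 *
       (minor (path_sum E) (pick S) (pick A) k * minor (path_sum E) (pick S) (pick B) k))"
proof -
  have pick_lt: "pick X x < n" if "X \<subseteq> {..<n}" "card X = k" "x < k" for X x
    using pick_in_set_le[of x X] that by auto
  have "submatrix (phi_Sigma n E) A B =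
      mat k k (\<lambda>(x, y). \<Sum>s<n. (Var (Om s) * path_sum E s (pick A x)) * path_sum E s (pick B y))"
    using A B dim_phi_Sigma[OF dag]
    by (intro eq_matI) (auto simp: submatrix_def phi_Sigma_trek_rule[OF dag] pick_lt
        Int_absorb1 Collect_conj_eq lessThan_def[symmetric])
  then have "det (submatrix (phi_Sigma n E) A B) =
      (\<Sum>S | S \<subseteq> {..<n} \<and> card S = k.
         minor (\<lambda>s u. Var (Om s) * path_sum E s u) (pick S) (pick A) k * minor (path_sum E) (pick S) (pick B) k)"
    using cauchy_binet_minor[of "\<lambda>s u. Var (Om s) * path_sum E s u" "path_sum E" n "pick A" "pick B" k]
    by (simp add: minor_def)
  also have "\<dots> = (\<Sum>S | S \<subseteq> {..<n} \<and> card S = k. Poly_Mapping.single (omega_monomial S) 1 *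
       (minor (path_sum E) (pick S) (pick A) k * minor (path_sum E) (pick S) (pick B) k))"
  proof (rule sum.cong[OF refl])
    fix S assume S: "S \<in> {S. S \<subseteq> {..<n} \<and> card S = k}"
    then have fin: "finite S" using finite_subset by auto
    have "(\<Prod>i<k. Var (Om (pick S i))) = (\<Prod>s\<in>pick S ` {..<k}. Var (Om s))"
      using prod.reindex[OF pick_inj_on[OF fin], of "\<lambda>s. Var (Om s)"] S by (simp add: o_def)
    also have "pick S ` {..<k} = S" using pick_image[OF fin] S by simp
    finally have "(\<Prod>i<k. Var (Om (pick S i))) = Poly_Mapping.single (omega_monomial S) 1"
      using prod_Var_Om[OF fin] by simp
    then show "minor (\<lambda>s u. Var (Om s) * path_sum E s u) (pick S) (pick A) k * minor (path_sum E) (pick S) (pick B) k =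
        Poly_Mapping.single (omega_monomial S) 1 * (minor (path_sum E) (pick S) (pick A) k * minor (path_sum E) (pick S) (pick B) k)"
      by (simp add: minor_scale_rows)
  qed
  finally show ?thesis .
qed

lemma card_keys_minor_path_sum_pick:
  assumes dag: "is_dag n E" and "finite S" "card S = k" "finite A" "card A = k"
  shows "card (pkeys (minor (path_sum E) (pick S) (pick A) k)) = card (disjoint_path_systems E S A)"
proof -
  have "inj_on (pick S) {..<k}" "inj_on (pick A) {..<k}" "pick S ` {..<k} = S" "pick A ` {..<k} = A"
    using pick_inj_on[OF assms(2)] pick_inj_on[OF assms(4)] pick_image[OF assms(2)] pick_image[OF assms(4)]
      assms(3,5) by simp_all
  then show ?thesis using card_keys_minor_path_sum[OF dag, of "pick S" k "pick A"] by simp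
qed

lemma sum_eq_1_cong:
  fixes c d :: "'i \<Rightarrow> nat"
  assumes "finite I" and "\<And>i. i \<in> I \<Longrightarrow> (c i = 0 \<longleftrightarrow> d i = 0) \<and> (c i = 1 \<longleftrightarrow> d i = 1)"
  shows "sum c I = 1 \<longleftrightarrow> sum d I = 1"
  unfolding sum_eq_1_iff[OF assms(1)] using assms(2) by metis

lemma card_keys_minor_path_sum_product:
  fixes F G :: rpoly
  assumes dag: "is_dag n E" and "finite S" "card S = k" "finite A" "card A = k" "finite B" "card B = k"
  defines "F \<equiv> minor (path_sum E) (pick S) (pick A) k" and "G \<equiv> minor (path_sum E) (pick S) (pick B) k"
  shows "card (pkeys (F * G)) = 0 \<longleftrightarrow> card (disjoint_path_systems E S A) * card (disjoint_path_systems E S B) = 0"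
    and "card (pkeys (F * G)) = 1 \<longleftrightarrow> card (disjoint_path_systems E S A) * card (disjoint_path_systems E S B) = 1"
proof -
  have cF: "card (pkeys F) = card (disjoint_path_systems E S A)"
    and cG: "card (pkeys G) = card (disjoint_path_systems E S B)"
    using card_keys_minor_path_sum_pick[OF dag] assms(2-7) unfolding F_def G_def by simp_all
  have "card (pkeys p) = 0 \<longleftrightarrow> p = 0" for p :: rpoly by (simp add: card_0_eq)
  then have "card (pkeys (F * G)) = 0 \<longleftrightarrow> card (pkeys F) = 0 \<or> card (pkeys G) = 0"
    by (simp only: mult_eq_0_iff)
  then show "card (pkeys (F * G)) = 0 \<longleftrightarrow> card (disjoint_path_systems E S A) * card (disjoint_path_systems E S B) = 0"
    unfolding cF cG by simp
  show "card (pkeys (F * G)) = 1 \<longleftrightarrow> card (disjoint_path_systems E S A) * card (disjoint_path_systems E S B) = 1"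
    unfolding card_keys_mult_eq_1_iff cF cG by simp
qed

theorem is_monomial_det_submatrix_iff:
  assumes dag: "is_dag n E" and A: "A \<subseteq> {..<n}" "card A = k" and B: "B \<subseteq> {..<n}" "card B = k"
  shows "is_monomial (det (submatrix (phi_Sigma n E) A B)) \<longleftrightarrow>
    (\<Sum>S | S \<subseteq> {..<n} \<and> card S = k. card (disjoint_path_systems E S A) * card (disjoint_path_systems E S B)) = 1"
proof -
  let ?SS = "{S. S \<subseteq> {..<n} \<and> card S = k}"
  let ?F = "\<lambda>S. minor (path_sum E) (pick S) (pick A) k" and ?G = "\<lambda>S. minor (path_sum E) (pick S) (pick B) k"
  let ?t = "\<lambda>S. Poly_Mapping.single (omega_monomial S) 1 * (?F S * ?G S)"
  have finSS: "finite ?SS" by (rule finite_subset[of _ "Pow {..<n}"]) auto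
  have fin: "finite S" if "S \<in> ?SS" for S using that finite_subset by auto
  have "pkeys (?t S) \<inter> pkeys (?t S') = {}" if "S \<in> ?SS" "S' \<in> ?SS" "S \<noteq> S'" for S S'
    using that fin by (intro keys_omega_monomial_mult_disjoint vars_within_mult vars_within_minor_path_sum_Lam)
  then have "card (pkeys (det (submatrix (phi_Sigma n E) A B))) = (\<Sum>S\<in>?SS. card (pkeys (?t S)))"
    unfolding det_submatrix_phi_Sigma[OF dag A B] by (rule card_keys_sum_disjoint[OF finSS])
  also have "\<dots> = (\<Sum>S\<in>?SS. card (pkeys (?F S * ?G S)))" by (simp only: card_keys_single_one_mult)
  finally have card_det: "card (pkeys (det (submatrix (phi_Sigma n E) A B))) = (\<Sum>S\<in>?SS. card (pkeys (?F S * ?G S)))" .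
  have "(\<Sum>S\<in>?SS. card (pkeys (?F S * ?G S))) = 1 \<longleftrightarrow>
      (\<Sum>S\<in>?SS. card (disjoint_path_systems E S A) * card (disjoint_path_systems E S B)) = 1"
  proof (rule sum_eq_1_cong[OF finSS], rule conjI)
    fix S assume S: "S \<in> ?SS"
    note prod = card_keys_minor_path_sum_product[OF dag fin[OF S] _ finite_subset[OF A(1)] A(2)
        finite_subset[OF B(1)] B(2)]
    show "card (pkeys (?F S * ?G S)) = 0 \<longleftrightarrow>
        card (disjoint_path_systems E S A) * card (disjoint_path_systems E S B) = 0"
      "card (pkeys (?F S * ?G S)) = 1 \<longleftrightarrow>
        card (disjoint_path_systems E S A) * card (disjoint_path_systems E S B) = 1"
      using prod S by simp_all
  qed
  then show ?thesis unfolding is_monomial_iff_card_keys card_det .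
qed

section \<open>Trek systems without sided intersection\<close>

definition disjoint_trek_system ::
  "(nat \<times> nat) set \<Rightarrow> nat set \<Rightarrow> nat set \<Rightarrow> (nat list \<times> nat list) set \<Rightarrow> bool" where
  "disjoint_trek_system E A B T \<longleftrightarrow> trek_system E A B T \<and> no_sided_intersection T"

lemma disjoint_trek_systemD:
  assumes "disjoint_trek_system E A B T"
  shows "finite T" "card T = card A" "\<And>t. t \<in> T \<Longrightarrow> is_trek E t"
    "left_node ` T = A" "right_node ` T = B"
    "\<And>t t'. t \<in> T \<Longrightarrow> t' \<in> T \<Longrightarrow> t \<noteq> t' \<Longrightarrow> set (fst t) \<inter> set (fst t') = {}"
    "\<And>t t'. t \<in> T \<Longrightarrow> t' \<in> T \<Longrightarrow> t \<noteq> t' \<Longrightarrow> set (snd t) \<inter> set (snd t') = {}"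
  using assms by (auto simp: disjoint_trek_system_def trek_system_def no_sided_intersection_def)

lemma disjoint_trek_system_inj_on:
  assumes T: "disjoint_trek_system E A B T" and AB: "card A = card B"
  shows "inj_on left_node T" "inj_on right_node T" "inj_on (\<lambda>t. hd (fst t)) T"
proof -
  note D = disjoint_trek_systemD[OF T]
  show "inj_on left_node T" "inj_on right_node T"
    using D(1,2,4,5) AB by (auto intro: eq_card_imp_inj_on)
  show "inj_on (\<lambda>t. hd (fst t)) T"
  proof (rule inj_onI, rule ccontr)
    fix t t' assume tt: "t \<in> T" "t' \<in> T" "hd (fst t) = hd (fst t')" "t \<noteq> t'"
    have "fst t \<noteq> []" "fst t' \<noteq> []" using D(3)[OF tt(1)] D(3)[OF tt(2)] by (auto simp: is_trek_def dpath_def)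
    then have "hd (fst t) \<in> set (fst t) \<inter> set (fst t')" using tt(3) by (metis IntI list.set_sel(1))
    then show False using D(6)[OF tt(1,2,4)] by auto
  qed
qed

definition trek_paths ::
  "nat set \<Rightarrow> nat set \<Rightarrow> (nat list \<times> nat list) set \<Rightarrow> nat set \<times> (nat \<Rightarrow> nat list) \<times> (nat \<Rightarrow> nat list)" where
  "trek_paths A B T = ((\<lambda>t. hd (fst t)) ` T,
     restrict (\<lambda>a. fst (the_inv_into T left_node a)) A, restrict (\<lambda>b. snd (the_inv_into T right_node b)) B)"

definition treks_of_paths ::
  "nat set \<Rightarrow> nat set \<Rightarrow> (nat \<Rightarrow> nat list) \<Rightarrow> (nat \<Rightarrow> nat list) \<Rightarrow> (nat list \<times> nat list) set" where
  "treks_of_paths A B \<sigma> \<tau> = {(\<sigma> a, \<tau> b) | a b. a \<in> A \<and> b \<in> B \<and> hd (\<sigma> a) = hd (\<tau> b)}"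

lemma side_paths_disjoint_path_system:
  fixes side :: "nat list \<times> nat list \<Rightarrow> nat list" and ends :: "nat list \<times> nat list \<Rightarrow> nat"
  assumes inj: "inj_on ends T" and img: "ends ` T = A"
    and paths: "\<And>t. t \<in> T \<Longrightarrow> dpath E (side t) \<and> last (side t) = ends t \<and> hd (side t) = hd (fst t)"
    and disj: "\<And>t t'. t \<in> T \<Longrightarrow> t' \<in> T \<Longrightarrow> t \<noteq> t' \<Longrightarrow> set (side t) \<inter> set (side t') = {}"
  shows "restrict (\<lambda>a. side (the_inv_into T ends a)) A \<in> disjoint_path_systems E ((\<lambda>t. hd (fst t)) ` T) A"
proof (rule disjoint_path_systemsI)
  have mem: "the_inv_into T ends a \<in> T" "ends (the_inv_into T ends a) = a" if "a \<in> A" for a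
    using that inj img by (auto intro: the_inv_into_into f_the_inv_into_f)
  show "dpath E (restrict (\<lambda>a. side (the_inv_into T ends a)) A a)"
    "last (restrict (\<lambda>a. side (the_inv_into T ends a)) A a) = a" if "a \<in> A" for a
    using that mem paths by auto
  have "(\<lambda>a. hd (restrict (\<lambda>a. side (the_inv_into T ends a)) A a)) ` A =
      (\<lambda>a. hd (fst (the_inv_into T ends a))) ` A"
    by (rule image_cong[OF refl]) (use mem paths in simp)
  also have "\<dots> = (\<lambda>t. hd (fst t)) ` (the_inv_into T ends ` A)" by (rule image_image[symmetric])
  also have "the_inv_into T ends ` A = T" using the_inv_into_onto[OF inj] img by simp
  finally show "(\<lambda>a. hd (restrict (\<lambda>a. side (the_inv_into T ends a)) A a)) ` A = (\<lambda>t. hd (fst t)) ` T" .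
  show "set (restrict (\<lambda>a. side (the_inv_into T ends a)) A a) \<inter>
      set (restrict (\<lambda>a. side (the_inv_into T ends a)) A b) = {}"
    if "a \<in> A" "b \<in> A" "a \<noteq> b" for a b
    using that mem disj by (metis restrict_apply')
qed simp

lemma trek_paths_mem:
  assumes dag: "is_dag n E" and A: "A \<subseteq> {..<n}" and AB: "card A = card B"
    and T: "disjoint_trek_system E A B T"
  shows "trek_paths A B T \<in>
    Sigma {S. S \<subseteq> {..<n} \<and> card S = card A} (\<lambda>S. disjoint_path_systems E S A \<times> disjoint_path_systems E S B)"
proof -
  note D = disjoint_trek_systemD[OF T] and I = disjoint_trek_system_inj_on[OF T AB]
  have trek: "dpath E (fst t)" "dpath E (snd t)" "hd (snd t) = hd (fst t)" if "t \<in> T" for t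
    using D(3)[OF that] by (auto simp: is_trek_def)
  have "(\<lambda>t. hd (fst t)) ` T \<subseteq> {..<n}"
  proof
    fix x assume "x \<in> (\<lambda>t. hd (fst t)) ` T"
    then obtain t where t: "t \<in> T" "x = hd (fst t)" by blast
    have "last (fst t) \<in> A" using D(4) t(1) by (auto simp: left_node_def)
    then show "x \<in> {..<n}" using hd_dpath_in_nodes[OF dag trek(1)[OF t(1)]] t(2) A by auto
  qed
  moreover have "card ((\<lambda>t. hd (fst t)) ` T) = card A" using card_image[OF I(3)] D(2) by simp
  moreover have "restrict (\<lambda>a. fst (the_inv_into T left_node a)) A \<in> disjoint_path_systems E ((\<lambda>t. hd (fst t)) ` T) A"
    using D(6) trek by (intro side_paths_disjoint_path_system[OF I(1) D(4)]) (auto simp: left_node_def)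
  moreover have "restrict (\<lambda>b. snd (the_inv_into T right_node b)) B \<in> disjoint_path_systems E ((\<lambda>t. hd (fst t)) ` T) B"
    using D(7) trek by (intro side_paths_disjoint_path_system[OF I(2) D(5)]) (auto simp: right_node_def)
  ultimately show ?thesis by (simp add: trek_paths_def)
qed

lemma mem_treks_of_paths:
  "t \<in> treks_of_paths A B \<sigma> \<tau> \<longleftrightarrow> (\<exists>a\<in>A. \<exists>b\<in>B. t = (\<sigma> a, \<tau> b) \<and> hd (\<sigma> a) = hd (\<tau> b))"
  unfolding treks_of_paths_def by auto

context
  fixes E S A B \<sigma> \<tau>
  assumes \<sigma>: "\<sigma> \<in> disjoint_path_systems E S A" and \<tau>: "\<tau> \<in> disjoint_path_systems E S B"
begin

lemma treks_of_paths_match_unique: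
  assumes "a \<in> A" "a' \<in> A" "b \<in> B" "b' \<in> B" "hd (\<sigma> a) = hd (\<tau> b)" "hd (\<sigma> a') = hd (\<tau> b')"
    and "a = a' \<or> b = b'"
  shows "a = a' \<and> b = b'"
  using assms inj_on_hd_disjoint_path_system[OF \<sigma>] inj_on_hd_disjoint_path_system[OF \<tau>]
  by (metis inj_onD)

lemma left_node_treks_of_paths: "left_node ` treks_of_paths A B \<sigma> \<tau> = A"
proof
  show "left_node ` treks_of_paths A B \<sigma> \<tau> \<subseteq> A"
    using disjoint_path_systemsD(3)[OF \<sigma>] by (auto simp: mem_treks_of_paths left_node_def)
  show "A \<subseteq> left_node ` treks_of_paths A B \<sigma> \<tau>"
  proof
    fix a assume a: "a \<in> A"
    then obtain b where b: "b \<in> B" "hd (\<tau> b) = hd (\<sigma> a)"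
      using disjoint_path_systemsD(4)[OF \<sigma>] disjoint_path_systemsD(4)[OF \<tau>] by (metis imageE imageI)
    then have "(\<sigma> a, \<tau> b) \<in> treks_of_paths A B \<sigma> \<tau>"
      unfolding mem_treks_of_paths using a by (intro bexI[of _ a] bexI[of _ b]) auto
    moreover have "left_node (\<sigma> a, \<tau> b) = a"
      using disjoint_path_systemsD(3)[OF \<sigma> a] by (simp add: left_node_def)
    ultimately show "a \<in> left_node ` treks_of_paths A B \<sigma> \<tau>" by (metis image_eqI)
  qed
qed

lemma right_node_treks_of_paths: "right_node ` treks_of_paths A B \<sigma> \<tau> = B"
proof
  show "right_node ` treks_of_paths A B \<sigma> \<tau> \<subseteq> B"
    using disjoint_path_systemsD(3)[OF \<tau>] by (auto simp: mem_treks_of_paths right_node_def)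
  show "B \<subseteq> right_node ` treks_of_paths A B \<sigma> \<tau>"
  proof
    fix b assume b: "b \<in> B"
    then obtain a where a: "a \<in> A" "hd (\<sigma> a) = hd (\<tau> b)"
      using disjoint_path_systemsD(4)[OF \<sigma>] disjoint_path_systemsD(4)[OF \<tau>] by (metis imageE imageI)
    then have "(\<sigma> a, \<tau> b) \<in> treks_of_paths A B \<sigma> \<tau>"
      unfolding mem_treks_of_paths using b by (intro bexI[of _ a] bexI[of _ b]) auto
    moreover have "right_node (\<sigma> a, \<tau> b) = b"
      using disjoint_path_systemsD(3)[OF \<tau> b] by (simp add: right_node_def)
    ultimately show "b \<in> right_node ` treks_of_paths A B \<sigma> \<tau>" by (metis image_eqI)
  qed
qed

lemma treks_of_paths_elem:
  assumes "t \<in> treks_of_paths A B \<sigma> \<tau>"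
  obtains a b where "a \<in> A" "b \<in> B" "t = (\<sigma> a, \<tau> b)" "hd (\<sigma> a) = hd (\<tau> b)"
  using assms unfolding mem_treks_of_paths by blast

lemma inj_on_left_node_treks_of_paths: "inj_on left_node (treks_of_paths A B \<sigma> \<tau>)"
proof (rule inj_onI)
  fix t t' assume tt: "t \<in> treks_of_paths A B \<sigma> \<tau>" "t' \<in> treks_of_paths A B \<sigma> \<tau>"
    and eq: "left_node t = left_node t'"
  obtain a b where ab: "a \<in> A" "b \<in> B" "t = (\<sigma> a, \<tau> b)" "hd (\<sigma> a) = hd (\<tau> b)"
    using tt(1) by (rule treks_of_paths_elem)
  obtain a' b' where ab': "a' \<in> A" "b' \<in> B" "t' = (\<sigma> a', \<tau> b')" "hd (\<sigma> a') = hd (\<tau> b')"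
    using tt(2) by (rule treks_of_paths_elem)
  have "a = last (\<sigma> a)" using disjoint_path_systemsD(3)[OF \<sigma> ab(1)] by simp
  also have "\<dots> = left_node t'" using eq ab(3) by (simp add: left_node_def)
  also have "\<dots> = a'" using disjoint_path_systemsD(3)[OF \<sigma> ab'(1)] ab'(3) by (simp add: left_node_def)
  finally have aa: "a = a'" .
  then have "b = b'" using treks_of_paths_match_unique[OF ab(1) ab'(1) ab(2) ab'(2) ab(4) ab'(4)] by blast
  then show "t = t'" using aa ab(3) ab'(3) by simp
qed

lemma inj_on_right_node_treks_of_paths: "inj_on right_node (treks_of_paths A B \<sigma> \<tau>)"
proof (rule inj_onI)
  fix t t' assume tt: "t \<in> treks_of_paths A B \<sigma> \<tau>" "t' \<in> treks_of_paths A B \<sigma> \<tau>"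
    and eq: "right_node t = right_node t'"
  obtain a b where ab: "a \<in> A" "b \<in> B" "t = (\<sigma> a, \<tau> b)" "hd (\<sigma> a) = hd (\<tau> b)"
    using tt(1) by (rule treks_of_paths_elem)
  obtain a' b' where ab': "a' \<in> A" "b' \<in> B" "t' = (\<sigma> a', \<tau> b')" "hd (\<sigma> a') = hd (\<tau> b')"
    using tt(2) by (rule treks_of_paths_elem)
  have "b = last (\<tau> b)" using disjoint_path_systemsD(3)[OF \<tau> ab(2)] by simp
  also have "\<dots> = right_node t'" using eq ab(3) by (simp add: right_node_def)
  also have "\<dots> = b'" using disjoint_path_systemsD(3)[OF \<tau> ab'(2)] ab'(3) by (simp add: right_node_def)
  finally have bb: "b = b'" .
  then have "a = a'" using treks_of_paths_match_unique[OF ab(1) ab'(1) ab(2) ab'(2) ab(4) ab'(4)] by blast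
  then show "t = t'" using bb ab(3) ab'(3) by simp
qed

lemma no_sided_intersection_treks_of_paths: "no_sided_intersection (treks_of_paths A B \<sigma> \<tau>)"
  unfolding no_sided_intersection_def
proof (intro ballI impI)
  fix t t' assume tt: "t \<in> treks_of_paths A B \<sigma> \<tau>" "t' \<in> treks_of_paths A B \<sigma> \<tau>" "t \<noteq> t'"
  obtain a b where ab: "a \<in> A" "b \<in> B" "t = (\<sigma> a, \<tau> b)" "hd (\<sigma> a) = hd (\<tau> b)"
    using tt(1) by (rule treks_of_paths_elem)
  obtain a' b' where ab': "a' \<in> A" "b' \<in> B" "t' = (\<sigma> a', \<tau> b')" "hd (\<sigma> a') = hd (\<tau> b')"
    using tt(2) by (rule treks_of_paths_elem)
  have "a \<noteq> a'" "b \<noteq> b'"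
    using treks_of_paths_match_unique[OF ab(1) ab'(1) ab(2) ab'(2) ab(4) ab'(4)] tt(3) ab(3) ab'(3)
    by (metis prod.inject)+
  then show "set (fst t) \<inter> set (fst t') = {} \<and> set (snd t) \<inter> set (snd t') = {}"
    using disjoint_path_systemsD(5)[OF \<sigma> ab(1) ab'(1)] disjoint_path_systemsD(5)[OF \<tau> ab(2) ab'(2)] ab(3) ab'(3)
    by simp
qed

lemma treks_of_paths_disjoint_trek_system:
  assumes fin: "finite A" "finite B"
  shows "disjoint_trek_system E A B (treks_of_paths A B \<sigma> \<tau>)"
proof -
  let ?T = "treks_of_paths A B \<sigma> \<tau>"
  have "?T \<subseteq> (\<lambda>(a, b). (\<sigma> a, \<tau> b)) ` (A \<times> B)" by (auto simp: mem_treks_of_paths)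
  then have "finite ?T" using fin by (auto intro: finite_subset)
  moreover have "card ?T = card A"
    using card_image[OF inj_on_left_node_treks_of_paths] by (simp only: left_node_treks_of_paths)
  moreover have "is_trek E t" if "t \<in> ?T" for t
    using that disjoint_path_systemsD(2)[OF \<sigma>] disjoint_path_systemsD(2)[OF \<tau>]
    by (auto simp: is_trek_def elim: treks_of_paths_elem)
  ultimately show ?thesis
    using left_node_treks_of_paths right_node_treks_of_paths no_sided_intersection_treks_of_paths
    by (simp add: disjoint_trek_system_def trek_system_def)
qed

lemma tops_treks_of_paths: "(\<lambda>t. hd (fst t)) ` treks_of_paths A B \<sigma> \<tau> = S"
proof
  note D\<sigma> = disjoint_path_systemsD[OF \<sigma>] and D\<tau> = disjoint_path_systemsD[OF \<tau>]
  show "(\<lambda>t. hd (fst t)) ` treks_of_paths A B \<sigma> \<tau> \<subseteq> S" using D\<sigma>(4) by (auto simp: mem_treks_of_paths)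
  show "S \<subseteq> (\<lambda>t. hd (fst t)) ` treks_of_paths A B \<sigma> \<tau>"
  proof
    fix x assume "x \<in> S"
    then obtain a where a: "a \<in> A" "x = hd (\<sigma> a)" using D\<sigma>(4) by auto
    then obtain b where b: "b \<in> B" "hd (\<tau> b) = hd (\<sigma> a)" using D\<tau>(4) D\<sigma>(4) by (metis imageE imageI)
    then have "(\<sigma> a, \<tau> b) \<in> treks_of_paths A B \<sigma> \<tau>"
      unfolding mem_treks_of_paths using a by (intro bexI[of _ a] bexI[of _ b]) auto
    then show "x \<in> (\<lambda>t. hd (fst t)) ` treks_of_paths A B \<sigma> \<tau>" using a(2) by (metis fst_conv image_eqI)
  qed
qed

lemma left_path_treks_of_paths:
  assumes a: "a \<in> A" shows "fst (the_inv_into (treks_of_paths A B \<sigma> \<tau>) left_node a) = \<sigma> a"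
proof -
  let ?T = "treks_of_paths A B \<sigma> \<tau>"
  note inj = inj_on_left_node_treks_of_paths
  have img: "a \<in> left_node ` ?T" using a left_node_treks_of_paths by simp
  have "the_inv_into ?T left_node a \<in> ?T" by (rule the_inv_into_into[OF inj img subset_refl])
  then obtain a' b' where ab': "a' \<in> A" "the_inv_into ?T left_node a = (\<sigma> a', \<tau> b')"
    by (rule treks_of_paths_elem)
  have "left_node (the_inv_into ?T left_node a) = a" by (rule f_the_inv_into_f[OF inj img])
  then have "a' = a" using ab' disjoint_path_systemsD(3)[OF \<sigma> ab'(1)] by (simp add: left_node_def)
  then show ?thesis using ab'(2) by simp
qed

lemma right_path_treks_of_paths:
  assumes b: "b \<in> B" shows "snd (the_inv_into (treks_of_paths A B \<sigma> \<tau>) right_node b) = \<tau> b"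
proof -
  let ?T = "treks_of_paths A B \<sigma> \<tau>"
  note inj = inj_on_right_node_treks_of_paths
  have img: "b \<in> right_node ` ?T" using b right_node_treks_of_paths by simp
  have "the_inv_into ?T right_node b \<in> ?T" by (rule the_inv_into_into[OF inj img subset_refl])
  then obtain a' b' where ab': "b' \<in> B" "the_inv_into ?T right_node b = (\<sigma> a', \<tau> b')"
    by (rule treks_of_paths_elem)
  have "right_node (the_inv_into ?T right_node b) = b" by (rule f_the_inv_into_f[OF inj img])
  then have "b' = b" using ab' disjoint_path_systemsD(3)[OF \<tau> ab'(1)] by (simp add: right_node_def)
  then show ?thesis using ab'(2) by simp
qed

lemma trek_paths_treks_of_paths: "trek_paths A B (treks_of_paths A B \<sigma> \<tau>) = (S, \<sigma>, \<tau>)"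
proof -
  have "restrict (\<lambda>a. fst (the_inv_into (treks_of_paths A B \<sigma> \<tau>) left_node a)) A = \<sigma>"
    using left_path_treks_of_paths disjoint_path_systemsD(1)[OF \<sigma>] by (auto simp: extensional_def)
  moreover have "restrict (\<lambda>b. snd (the_inv_into (treks_of_paths A B \<sigma> \<tau>) right_node b)) B = \<tau>"
    using right_path_treks_of_paths disjoint_path_systemsD(1)[OF \<tau>] by (auto simp: extensional_def)
  ultimately show ?thesis by (simp add: trek_paths_def tops_treks_of_paths)
qed

end

lemma treks_of_trek_paths:
  assumes T: "disjoint_trek_system E A B T" and AB: "card A = card B"
  shows "treks_of_paths A B (fst (snd (trek_paths A B T))) (snd (snd (trek_paths A B T))) = T"
proof -
  note D = disjoint_trek_systemD[OF T] and I = disjoint_trek_system_inj_on[OF T AB]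
  let ?l = "the_inv_into T left_node" and ?r = "the_inv_into T right_node"
  have l: "?l a \<in> T" "left_node (?l a) = a" if "a \<in> A" for a
    using that D(4) I(1) by (auto intro: the_inv_into_into f_the_inv_into_f)
  have r: "?r b \<in> T" "right_node (?r b) = b" if "b \<in> B" for b
    using that D(5) I(2) by (auto intro: the_inv_into_into f_the_inv_into_f)
  have top: "hd (snd t) = hd (fst t)" if "t \<in> T" for t using D(3)[OF that] by (simp add: is_trek_def)
  show ?thesis
  proof (intro equalityI subsetI)
    fix t assume "t \<in> treks_of_paths A B (fst (snd (trek_paths A B T))) (snd (snd (trek_paths A B T)))"
    then obtain a b where ab: "a \<in> A" "b \<in> B" "t = (fst (?l a), snd (?r b))"
      "hd (fst (?l a)) = hd (snd (?r b))"
      by (auto simp: trek_paths_def mem_treks_of_paths)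
    have "?l a = ?r b"
      using inj_onD[OF I(3) _ l(1)[OF ab(1)] r(1)[OF ab(2)]] ab(4) top[OF r(1)[OF ab(2)]] by simp
    then show "t \<in> T" using ab(3) r(1)[OF ab(2)] by simp
  next
    fix t assume t: "t \<in> T"
    then have lr: "left_node t \<in> A" "right_node t \<in> B" "?l (left_node t) = t" "?r (right_node t) = t"
      using D(4,5) I(1,2) by (auto intro: the_inv_into_f_f)
    then show "t \<in> treks_of_paths A B (fst (snd (trek_paths A B T))) (snd (snd (trek_paths A B T)))"
      unfolding trek_paths_def mem_treks_of_paths using top[OF t]
      by (intro bexI[of _ "left_node t"] bexI[of _ "right_node t"]) auto
  qed
qed

theorem card_disjoint_trek_systems:
  assumes dag: "is_dag n E" and A: "A \<subseteq> {..<n}" and B: "B \<subseteq> {..<n}" and AB: "card A = card B"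
  shows "card {T. disjoint_trek_system E A B T} =
    (\<Sum>S | S \<subseteq> {..<n} \<and> card S = card A. card (disjoint_path_systems E S A) * card (disjoint_path_systems E S B))"
proof -
  let ?SS = "{S. S \<subseteq> {..<n} \<and> card S = card A}"
  let ?X = "Sigma ?SS (\<lambda>S. disjoint_path_systems E S A \<times> disjoint_path_systems E S B)"
  have fin: "finite A" "finite B" using A B finite_subset by auto
  have finSS: "finite ?SS" by (rule finite_subset[of _ "Pow {..<n}"]) auto
  have "bij_betw (trek_paths A B) {T. disjoint_trek_system E A B T} ?X"
  proof (rule bij_betw_byWitness[where f' = "\<lambda>(S, \<sigma>, \<tau>). treks_of_paths A B \<sigma> \<tau>"])
    show "\<forall>T\<in>{T. disjoint_trek_system E A B T}. (\<lambda>(S, \<sigma>, \<tau>). treks_of_paths A B \<sigma> \<tau>) (trek_paths A B T) = T"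
      using treks_of_trek_paths[OF _ AB] by (auto simp: split_beta)
    show "\<forall>x\<in>?X. trek_paths A B ((\<lambda>(S, \<sigma>, \<tau>). treks_of_paths A B \<sigma> \<tau>) x) = x"
      using trek_paths_treks_of_paths by auto
    show "trek_paths A B ` {T. disjoint_trek_system E A B T} \<subseteq> ?X"
      by (rule image_subsetI) (rule trek_paths_mem[OF dag A AB], simp)
    show "(\<lambda>(S, \<sigma>, \<tau>). treks_of_paths A B \<sigma> \<tau>) ` ?X \<subseteq> {T. disjoint_trek_system E A B T}"
    proof
      fix T assume "T \<in> (\<lambda>(S, \<sigma>, \<tau>). treks_of_paths A B \<sigma> \<tau>) ` ?X"
      then obtain S \<sigma> \<tau> where "\<sigma> \<in> disjoint_path_systems E S A" "\<tau> \<in> disjoint_path_systems E S B"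
        "T = treks_of_paths A B \<sigma> \<tau>" by auto
      then show "T \<in> {T. disjoint_trek_system E A B T}"
        using treks_of_paths_disjoint_trek_system[OF _ _ fin] by simp
    qed
  qed
  then have "card {T. disjoint_trek_system E A B T} = card ?X" by (rule bij_betw_same_card)
  also have "\<dots> = (\<Sum>S\<in>?SS. card (disjoint_path_systems E S A) * card (disjoint_path_systems E S B))"
    using finSS finite_disjoint_path_systems[OF dag fin(1)] finite_disjoint_path_systems[OF dag fin(2)]
    by (simp add: card_SigmaI card_cartesian_product)
  finally show ?thesis .
qed

theorem is_monomial_det_submatrix_iff_unique_trek_system:
  assumes dag: "is_dag n E" and A: "A \<subseteq> {..<n}" and B: "B \<subseteq> {..<n}" and AB: "card A = card B"
  shows "is_monomial (det (submatrix (phi_Sigma n E) A B)) \<longleftrightarrow>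
    (\<exists>!T. trek_system E A B T \<and> no_sided_intersection T)"
proof -
  have "is_monomial (det (submatrix (phi_Sigma n E) A B)) \<longleftrightarrow> card {T. disjoint_trek_system E A B T} = 1"
    using is_monomial_det_submatrix_iff[OF dag A refl B AB[symmetric]] card_disjoint_trek_systems[OF dag A B AB]
    by simp
  also have "\<dots> \<longleftrightarrow> (\<exists>!T. disjoint_trek_system E A B T)"
    by (auto simp: card_1_singleton_iff Ex1_def)
  finally show ?thesis by (simp add: disjoint_trek_system_def)
qed

theorem corollary4p5:
  fixes n :: nat and E :: "(nat \<times> nat) set" and i j :: nat and K :: "nat set"
  assumes "is_dag n E"
    and "i < n" and "j < n" and "i \<noteq> j"
    and "K \<subseteq> {..<n} - {i, j}"
    and "\<not> d_separates E K i j"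
  shows "is_monomial (det (submatrix (phi_Sigma n E) ({i} \<union> K) ({j} \<union> K)))
         \<longleftrightarrow> (\<exists>!T. trek_system E ({i} \<union> K) ({j} \<union> K) T \<and> no_sided_intersection T)"
proof (rule is_monomial_det_submatrix_iff_unique_trek_system[OF assms(1)])
  show "{i} \<union> K \<subseteq> {..<n}" "{j} \<union> K \<subseteq> {..<n}" using assms(2,3,5) by auto
  have "finite K" "i \<notin> K" "j \<notin> K" using assms(5) finite_subset by auto
  then show "card ({i} \<union> K) = card ({j} \<union> K)" by simp
qed

end
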